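(* Let $\sigma$ and $\tau$ be matchings and let $n\in\mathbb{N}$ with $n\geq|\sigma|$. Then $$|\mathcal{M}_{n}(\sigma(\tau+|\sigma|))|=|\mathcal{M}_{n}(\sigma)|+\sum_{\ell=|\sigma|}^{n}\sum_{k=0}^{n-\ell}\binom{2\ell+k-1}{k}\binom{2n-2\ell-k}{k}\,k!\,|\mu_{\ell}(\sigma)|\,|\mathcal{M}_{n-\ell-k}(\tau)|.$$
   Context: A matching of order $n$ is a partition of $[2n]=\{1,\dots,2n\}$ into blocks (edges) of size two; it is identified with the unique word $w\in[n]^{2n}$ in which the two vertices of each edge carry the same letter and the letters of edges appear in increasing order of their left (smaller) vertices (e.g. $1212$ is $\{\{1,3\},\{2,4\}\}$). $|\sigma|$ denotes the order (number of edges) of $\sigma$. A matching $\sigma$ of order $k$ is a pattern of $\tau$ (written $\sigma\le\tau$, "$\tau$ contains $\sigma$") if there are $i_1<\dots<i_{2k}$ in $[2|\tau|]$ with $\{i_p,i_q\}\in\tau$ iff $\{p,q\}\in\sigma$; otherwise $\tau$ avoids $\sigma$. $\mathcal{M}_n(S)$ is the set of matchings of order $n$ avoiding every pattern in $S$ ($\mathcal{M}_0(S)$ contains only the empty matching). For matchings $\sigma,\tau$, $\sigma(\tau+|\sigma|)$ is the juxtaposition: the word of $\sigma$ followed by the word of $\tau$ with $|\sigma|$ added to each letter. The rightmost edge of a matching is the edge with the largest right vertex. A matching $\lambda$ minimally contains $\sigma$ if it contains $\sigma$ and the matching obtained from $\lambda$ by deleting its rightmost edge does not contain $\sigma$; $\mu_\ell(\sigma)$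 is the set of matchings of order $\ell$ minimally containing $\sigma$. *)

theory Defs
  imports Main
begin

text \<open>A matching is a finite set of edges (2-element sets of vertices) partitioning
  the vertex set {0, ..., 2|M|-1} (0-based version of [2n]).  Its order is card M.\<close>

definition is_matching :: "nat set set \<Rightarrow> bool" where
  "is_matching M \<longleftrightarrow> finite M \<and> (\<forall>e\<in>M. card e = 2) \<and> \<Union>M = {..<2 * card M}
     \<and> (\<forall>e\<in>M. \<forall>e'\<in>M. e \<noteq> e' \<longrightarrow> e \<inter> e' = {})"

definition contains :: "nat set set \<Rightarrow> nat set set \<Rightarrow> bool" where
  "contains \<tau> \<sigma> \<longleftrightarrow> (\<exists>f. strict_mono_on {..<2 * card \<sigma>} f
      \<and> f ` {..<2 * card \<sigma>} \<subseteq> {..<2 * card \<tau>}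
      \<and> (\<forall>p<2 * card \<sigma>. \<forall>q<2 * card \<sigma>. {f p, f q} \<in> \<tau> \<longleftrightarrow> {p, q} \<in> \<sigma>))"

definition avoiders :: "nat \<Rightarrow> nat set set set \<Rightarrow> nat set set set" where
  "avoiders n S = {M. is_matching M \<and> card M = n \<and> (\<forall>s\<in>S. \<not> contains M s)}"

text \<open>Juxtaposition sigma (tau + |sigma|): shift vertices of tau by 2|sigma|.\<close>
definition juxt :: "nat set set \<Rightarrow> nat set set \<Rightarrow> nat set set" where
  "juxt \<sigma> \<tau> = \<sigma> \<union> (\<lambda>e. (\<lambda>x. x + 2 * card \<sigma>) ` e) ` \<tau>"

definition rightmost_edge :: "nat set set \<Rightarrow> nat set" where
  "rightmost_edge M = (THE e. e \<in> M \<and> 2 * card M - 1 \<in> e)"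

definition delete_rightmost :: "nat set set \<Rightarrow> nat set set" where
  "delete_rightmost M =
     (let e0 = rightmost_edge M; a = Min e0
      in (\<lambda>e. (\<lambda>x. if x < a then x else x - 1) ` e) ` (M - {e0}))"

text \<open>lambda minimally contains sigma (if lambda has no edges, the deletion condition
  is vacuous, since there is no rightmost edge).\<close>
definition minimally_contains :: "nat set set \<Rightarrow> nat set set \<Rightarrow> bool" where
  "minimally_contains L \<sigma> \<longleftrightarrow> contains L \<sigma>
     \<and> (L \<noteq> {} \<longrightarrow> \<not> contains (delete_rightmost L) \<sigma>)"

definition mu :: "nat \<Rightarrow> nat set set \<Rightarrow> nat set set set" where
  "mu l \<sigma> = {M. is_matching M \<and> card M = l \<and> minimally_contains M \<sigma>}"

end

theory Submission
  imports Defs "HOL-Library.Infinite_Set"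
begin

text \<open>
  A matching \<open>M\<close> of order \<open>n\<close> that contains \<open>\<sigma>\<close> but avoids \<open>\<sigma>(\<tau>+|\<sigma>|)\<close> is cut after
  its shortest prefix \<open>[0, c)\<close> in which \<open>\<sigma>\<close> occurs. By minimality of \<open>c\<close> the vertex
  \<open>c - 1\<close> is covered by an edge inside the prefix, so the edges inside the prefix
  standardize to a matching \<open>L\<close> of some order \<open>l\<close> that minimally contains \<open>\<sigma>\<close>.
  The edges inside \<open>[c, 2n)\<close> standardize to a matching \<open>V\<close> avoiding \<open>\<tau>\<close>, because an
  occurrence of \<open>\<tau>\<close> there would complete one of \<open>\<sigma>(\<tau>+|\<sigma>|)\<close>. The remaining
  \<open>k = c - 2l\<close> edges cross the cut: they pair a \<open>k\<close>-subset of \<open>[0, c - 1)\<close> with a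
  \<open>k\<close>-subset of \<open>[c, 2n)\<close> in one of \<open>k!\<close> ways. Conversely every such datum
  reassembles to such a matching with cut \<open>c\<close>; the matchings avoiding \<open>\<sigma>\<close> give the
  first summand.
\<close>

section \<open>Perfect matchings on a vertex set\<close>

definition perfect_matching :: "'a set set \<Rightarrow> 'a set \<Rightarrow> bool" where
  "perfect_matching E V \<longleftrightarrow> (\<forall>e\<in>E. card e = 2) \<and> \<Union>E = V
     \<and> (\<forall>e\<in>E. \<forall>e'\<in>E. e \<noteq> e' \<longrightarrow> e \<inter> e' = {})"

lemma is_matching_iff_perfect_matching:
  "is_matching M \<longleftrightarrow> finite M \<and> perfect_matching M {..<2 * card M}"
  unfolding is_matching_def perfect_matching_def by auto

lemma perfect_matching_card:
  assumes "perfect_matching E V" "finite V"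
  shows "finite E" "card V = 2 * card E"
proof -
  have sub: "E \<subseteq> Pow V" using assms(1) unfolding perfect_matching_def by auto
  then show "finite E" using assms(2) finite_subset by blast
  have "pairwise disjnt E" using assms(1) unfolding perfect_matching_def pairwise_def disjnt_def by blast
  moreover have "\<And>e. e \<in> E \<Longrightarrow> finite e" using sub assms(2) finite_subset by blast
  ultimately have "card V = sum card E"
    using card_Union_disjoint assms(1) unfolding perfect_matching_def by metis
  also have "\<dots> = 2 * card E" using assms(1) unfolding perfect_matching_def by simp
  finally show "card V = 2 * card E" .
qed

lemma is_matching_if_perfect_matching:
  assumes "perfect_matching M {..<2 * n}"
  shows "is_matching M" "card M = n"
  using perfect_matching_card[OF assms] assms is_matching_iff_perfect_matching by auto

lemma perfect_matching_edgeE: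
  assumes "perfect_matching E V" "e \<in> E"
  obtains a b where "e = {a, b}" "a \<noteq> b"
  using assms unfolding perfect_matching_def by (metis card_2_iff)

lemma perfect_matching_edge_nonempty: "perfect_matching E V \<Longrightarrow> e \<in> E \<Longrightarrow> e \<noteq> {}"
  unfolding perfect_matching_def by fastforce

lemma perfect_matching_edge_subset: "perfect_matching E V \<Longrightarrow> e \<in> E \<Longrightarrow> e \<subseteq> V"
  unfolding perfect_matching_def by blast

lemma perfect_matching_edge_unique:
  "perfect_matching E V \<Longrightarrow> e \<in> E \<Longrightarrow> e' \<in> E \<Longrightarrow> x \<in> e \<Longrightarrow> x \<in> e' \<Longrightarrow> e = e'"
  unfolding perfect_matching_def by blast

lemma perfect_matching_edge_disjoint:
  "perfect_matching E V \<Longrightarrow> e \<in> E \<Longrightarrow> e' \<in> E \<Longrightarrow> e \<noteq> e' \<Longrightarrow> e \<inter> e' = {}"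
  unfolding perfect_matching_def by simp

lemma perfect_matching_partner:
  assumes "perfect_matching E V" "x \<in> V"
  obtains y where "{x, y} \<in> E" "y \<noteq> x" "y \<in> V"
proof -
  obtain e where e: "e \<in> E" "x \<in> e" using assms unfolding perfect_matching_def by blast
  then have "card e = 2" "e \<subseteq> V" using assms(1) unfolding perfect_matching_def by auto
  then obtain y where "e = {x, y}" "y \<noteq> x"
    using e(2) by (auto simp: card_2_iff doubleton_eq_iff)
  then show ?thesis using that e(1) \<open>e \<subseteq> V\<close> by blast
qed

lemma perfect_matching_Un:
  assumes "perfect_matching E V" "perfect_matching F W" "V \<inter> W = {}"
  shows "perfect_matching (E \<union> F) (V \<union> W)"
proof -
  have "e \<inter> e' = {}" if "e \<in> E" "e' \<in> F" for e e'
    using perfect_matching_edge_subset[OF assms(1) that(1)]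
      perfect_matching_edge_subset[OF assms(2) that(2)] assms(3) by blast
  then have "\<forall>e\<in>E \<union> F. \<forall>e'\<in>E \<union> F. e \<noteq> e' \<longrightarrow> e \<inter> e' = {}"
    using assms(1,2) unfolding perfect_matching_def by (metis Int_commute Un_iff)
  then show ?thesis using assms(1,2) unfolding perfect_matching_def by auto
qed

lemma perfect_matching_subset: "perfect_matching E V \<Longrightarrow> F \<subseteq> E \<Longrightarrow> perfect_matching F (\<Union>F)"
  unfolding perfect_matching_def by (meson subsetD)

lemma perfect_matching_Union_disjoint:
  assumes "perfect_matching M V" "E \<subseteq> M" "F \<subseteq> M" "E \<inter> F = {}"
  shows "\<Union>E \<inter> \<Union>F = {}"
proof (rule ccontr)
  assume "\<Union>E \<inter> \<Union>F \<noteq> {}"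
  then obtain x e e' where "e \<in> E" "e' \<in> F" "x \<in> e" "x \<in> e'" by blast
  then show False using perfect_matching_edge_unique[OF assms(1)] assms(2-4) by blast
qed

lemma finite_matchings: "finite {M. is_matching M \<and> card M = m}"
proof (rule finite_subset)
  show "{M. is_matching M \<and> card M = m} \<subseteq> Pow (Pow {..<2 * m})"
    unfolding is_matching_def by auto
qed simp

section \<open>Relabelling vertices\<close>

definition relabel :: "('a \<Rightarrow> 'b) \<Rightarrow> 'a set set \<Rightarrow> 'b set set" where
  "relabel h E = (\<lambda>e. h ` e) ` E"

lemma Union_relabel [simp]: "\<Union>(relabel h E) = h ` \<Union>E"
  unfolding relabel_def by auto

lemma relabel_mem_iff:
  assumes "inj_on h V" "\<Union>E \<subseteq> V" "e \<subseteq> V"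
  shows "h ` e \<in> relabel h E \<longleftrightarrow> e \<in> E"
proof
  assume "h ` e \<in> relabel h E"
  then obtain e' where "e' \<in> E" "h ` e = h ` e'" unfolding relabel_def by blast
  moreover have "e' \<subseteq> V" using \<open>e' \<in> E\<close> assms(2) by blast
  ultimately show "e \<in> E" using inj_on_image_eq_iff[OF assms(1) assms(3)] by metis
qed (simp add: relabel_def)

lemma card_relabel:
  assumes "inj_on h V" "\<Union>E \<subseteq> V"
  shows "card (relabel h E) = card E"
  unfolding relabel_def
proof (rule card_image, rule inj_onI)
  fix e e' assume "e \<in> E" "e' \<in> E" "h ` e = h ` e'"
  moreover have "e \<subseteq> V" "e' \<subseteq> V" using \<open>e \<in> E\<close> \<open>e' \<in> E\<close> assms(2) by blast+
  ultimately show "e = e'" using inj_on_image_eq_iff[OF assms(1)] by metis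
qed

lemma perfect_matching_relabel:
  assumes "inj_on h V" "perfect_matching E V"
  shows "perfect_matching (relabel h E) (h ` V)"
proof -
  have sub: "\<And>e. e \<in> E \<Longrightarrow> e \<subseteq> V" using assms(2) perfect_matching_edge_subset by blast
  have "card (h ` e) = 2" if "e \<in> E" for e
    using card_image[OF inj_on_subset[OF assms(1) sub[OF that]]] assms(2) that
    unfolding perfect_matching_def by simp
  moreover have "h ` e \<inter> h ` e' = {}" if "e \<in> E" "e' \<in> E" "h ` e \<noteq> h ` e'" for e e'
  proof -
    have "e \<noteq> e'" using that(3) by blast
    then have "e \<inter> e' = {}" using that(1,2) assms(2) unfolding perfect_matching_def by blast
    then show ?thesis using inj_on_image_Int[OF assms(1) sub[OF that(1)] sub[OF that(2)]] by simp
  qed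
  moreover have "\<Union>(relabel h E) = h ` V"
    using assms(2) unfolding perfect_matching_def by simp
  ultimately show ?thesis unfolding perfect_matching_def relabel_def by blast
qed

lemma relabel_inv_into:
  assumes "inj_on h V" "\<Union>E \<subseteq> V"
  shows "relabel (inv_into V h) (relabel h E) = E"
proof -
  have "inv_into V h ` h ` e = e" if "e \<in> E" for e
    using that assms(2) by (intro inv_into_image_cancel[OF assms(1)]) blast
  then show ?thesis unfolding relabel_def image_image by simp
qed

lemma relabel_relabel_inv_into:
  assumes "\<Union>E \<subseteq> h ` V"
  shows "relabel h (relabel (inv_into V h) E) = E"
proof -
  have "h ` inv_into V h ` e = e" if "e \<in> E" for e
    using that assms by (intro image_inv_into_cancel[OF refl]) blast
  then show ?thesis unfolding relabel_def image_image by simp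
qed

lemma strict_mono_on_enumerate: "finite A \<Longrightarrow> strict_mono_on {..<card A} (enumerate A)"
  by (simp add: finite_enumerate_mono strict_mono_on_def)

lemma enumerate_image_lessThan_card_minus_1:
  assumes "finite A" "A \<noteq> {}"
  shows "enumerate A ` {..<card A - 1} = A - {Max A}"
proof -
  have bij: "bij_betw (enumerate A) {..<card A} A" by (rule finite_bij_enumerate[OF assms(1)])
  have pos: "0 < card A" using assms by auto
  have "enumerate A (card A - 1) = Max A"
  proof (rule antisym)
    show "enumerate A (card A - 1) \<le> Max A"
      using finite_enumerate_in_set[OF assms(1)] pos assms(1) by simp
    have "a \<le> enumerate A (card A - 1)" if a: "a \<in> A" for a
    proof -
      obtain i where i: "i < card A" "enumerate A i = a" using finite_enumerate_Ex[OF assms(1) a] by blast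
      show ?thesis
      proof (cases "i = card A - 1")
        case False
        then have "enumerate A i < enumerate A (card A - 1)"
          using i(1) pos by (intro finite_enumerate_mono[OF _ assms(1)]) auto
        then show ?thesis using i(2) by simp
      qed (use i in simp)
    qed
    then show "Max A \<le> enumerate A (card A - 1)" using assms by simp
  qed
  moreover have "{..<card A - 1} = {..<card A} - {card A - 1}" using pos by auto
  ultimately show ?thesis
    using bij inj_on_image_set_diff[of "enumerate A" "{..<card A}" "{..<card A}" "{card A - 1}"] pos
    unfolding bij_betw_def by simp
qed

lemma enumerate_image_drop_last:
  fixes A :: "nat set" and c :: nat
  assumes "finite A" "A \<subseteq> {..<c}" "c - 1 \<in> A"
  shows "enumerate A ` {..<card A - 1} = A \<inter> {..<c - 1}"
proof -
  have "Max A = c - 1"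
  proof (rule Max_eqI)
    fix y assume "y \<in> A"
    then have "y < c" using assms(2) by blast
    then show "y \<le> c - 1" by simp
  qed (use assms in auto)
  then have "enumerate A ` {..<card A - 1} = A - {c - 1}"
    using enumerate_image_lessThan_card_minus_1[OF assms(1)] assms(3) by auto
  also have "\<dots> = A \<inter> {..<c - 1}"
  proof -
    have "x < c - 1" if "x \<in> A" "x \<noteq> c - 1" for x
    proof -
      have "x < c" using that(1) assms(2) by blast
      then show ?thesis using that(2) by linarith
    qed
    then show ?thesis by auto
  qed
  finally show ?thesis .
qed

lemma strict_mono_on_inv_into:
  fixes h :: "'a::linorder \<Rightarrow> 'b::linorder"
  assumes "strict_mono_on S h"
  shows "strict_mono_on (h ` S) (inv_into S h)"
proof (rule strict_mono_onI)
  fix x y assume "x \<in> h ` S" "y \<in> h ` S" "x < y"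
  then obtain a b where "a \<in> S" "b \<in> S" "x = h a" "y = h b" by blast
  moreover have "inj_on h S" using assms strict_mono_on_imp_inj_on by blast
  ultimately show "inv_into S h x < inv_into S h y"
    using \<open>x < y\<close> strict_mono_on_less[OF assms] by simp
qed

definition standardize :: "nat set set \<Rightarrow> nat set set" where
  "standardize E = relabel (inv_into {..<card (\<Union>E)} (enumerate (\<Union>E))) E"

lemma perfect_matching_relabel_enumerate:
  assumes "finite A" "perfect_matching L {..<card A}"
  shows "perfect_matching (relabel (enumerate A) L) A" "card (relabel (enumerate A) L) = card L"
proof -
  have bij: "bij_betw (enumerate A) {..<card A} A" by (rule finite_bij_enumerate[OF assms(1)])
  then show "perfect_matching (relabel (enumerate A) L) A"
    using perfect_matching_relabel[OF _ assms(2)] unfolding bij_betw_def by metis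
  show "card (relabel (enumerate A) L) = card L"
    using bij card_relabel[of "enumerate A" "{..<card A}" L] assms(2)
    unfolding bij_betw_def perfect_matching_def by simp
qed

lemma perfect_matching_standardize:
  assumes "perfect_matching E A" "finite A"
  shows "perfect_matching (standardize E) {..<card A}" "card (standardize E) = card E"
proof -
  have UE: "\<Union>E = A" using assms(1) unfolding perfect_matching_def by simp
  have "bij_betw (inv_into {..<card A} (enumerate A)) A {..<card A}"
    by (rule bij_betw_inv_into[OF finite_bij_enumerate[OF assms(2)]])
  then have inj: "inj_on (inv_into {..<card A} (enumerate A)) A"
    and img: "inv_into {..<card A} (enumerate A) ` A = {..<card A}" unfolding bij_betw_def by auto
  show "perfect_matching (standardize E) {..<card A}"
    unfolding standardize_def UE using perfect_matching_relabel[OF inj assms(1)] img by simp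
  show "card (standardize E) = card E"
    unfolding standardize_def UE using card_relabel[OF inj] UE by simp
qed

lemma is_matching_standardize:
  assumes "perfect_matching E A" "finite A"
  shows "is_matching (standardize E)" "card (standardize E) = card E"
  using perfect_matching_standardize[OF assms] perfect_matching_card(2)[OF assms]
    is_matching_if_perfect_matching(1)[of "standardize E" "card E"] by simp_all

lemma standardize_relabel_enumerate:
  assumes "finite A" "perfect_matching L {..<card A}"
  shows "standardize (relabel (enumerate A) L) = L"
proof -
  have bij: "bij_betw (enumerate A) {..<card A} A" by (rule finite_bij_enumerate[OF assms(1)])
  have UL: "\<Union>L = {..<card A}" using assms(2) unfolding perfect_matching_def by simp
  then have "\<Union>(relabel (enumerate A) L) = A" using bij unfolding bij_betw_def by simp
  then show ?thesis
    unfolding standardize_def using relabel_inv_into[of "enumerate A" "{..<card A}" L] bij UL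
    unfolding bij_betw_def by simp
qed

lemma relabel_enumerate_standardize:
  assumes "finite (\<Union>E)"
  shows "relabel (enumerate (\<Union>E)) (standardize E) = E"
  unfolding standardize_def
  by (rule relabel_relabel_inv_into)
    (use finite_bij_enumerate[OF assms] in \<open>simp add: bij_betw_def\<close>)

section \<open>Occurrences of a pattern within a set of vertices\<close>

definition occurs_within :: "nat set set \<Rightarrow> nat set set \<Rightarrow> nat set \<Rightarrow> bool" where
  "occurs_within \<sigma> M W \<longleftrightarrow> (\<exists>g. strict_mono_on {..<2 * card \<sigma>} g \<and> g ` {..<2 * card \<sigma>} \<subseteq> W
      \<and> (\<forall>p<2 * card \<sigma>. \<forall>q<2 * card \<sigma>. {g p, g q} \<in> M \<longleftrightarrow> {p, q} \<in> \<sigma>))"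

lemma contains_iff_occurs_within: "contains M \<sigma> \<longleftrightarrow> occurs_within \<sigma> M {..<2 * card M}"
  unfolding contains_def occurs_within_def by simp

lemma occurs_within_mono: "occurs_within \<sigma> M W \<Longrightarrow> W \<subseteq> W' \<Longrightarrow> occurs_within \<sigma> M W'"
  unfolding occurs_within_def by (elim exE conjE, intro exI conjI) auto

lemma not_occurs_within_empty:
  assumes "card \<sigma> \<noteq> 0"
  shows "\<not> occurs_within \<sigma> M {}"
proof
  assume "occurs_within \<sigma> M {}"
  then have "{..<2 * card \<sigma>} = {}" unfolding occurs_within_def by blast
  moreover have "0 \<in> {..<2 * card \<sigma>}" using assms by simp
  ultimately show False by blast
qed

lemma card_le_if_contains:
  assumes "contains L \<sigma>"
  shows "card \<sigma> \<le> card L"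
proof -
  obtain g where g: "strict_mono_on {..<2 * card \<sigma>} g" "g ` {..<2 * card \<sigma>} \<subseteq> {..<2 * card L}"
    using assms unfolding contains_def by blast
  have "card {..<2 * card \<sigma>} \<le> card {..<2 * card L}"
    using card_inj_on_le[OF strict_mono_on_imp_inj_on[OF g(1)] g(2)] by simp
  then show ?thesis by simp
qed

lemma occurs_within_cong:
  assumes "\<And>x y. x \<in> W \<Longrightarrow> y \<in> W \<Longrightarrow> {x, y} \<in> M \<longleftrightarrow> {x, y} \<in> M'"
  shows "occurs_within \<sigma> M W \<longleftrightarrow> occurs_within \<sigma> M' W"
proof -
  have "(\<forall>p<2 * card \<sigma>. \<forall>q<2 * card \<sigma>. {g p, g q} \<in> M \<longleftrightarrow> {p, q} \<in> \<sigma>)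
      \<longleftrightarrow> (\<forall>p<2 * card \<sigma>. \<forall>q<2 * card \<sigma>. {g p, g q} \<in> M' \<longleftrightarrow> {p, q} \<in> \<sigma>)"
    if g: "g ` {..<2 * card \<sigma>} \<subseteq> W" for g
  proof -
    have "{g p, g q} \<in> M \<longleftrightarrow> {g p, g q} \<in> M'" if "p < 2 * card \<sigma>" "q < 2 * card \<sigma>" for p q
      using assms g that by blast
    then show ?thesis by simp
  qed
  then show ?thesis unfolding occurs_within_def by (intro ex_cong1 conj_cong refl) simp
qed

lemma occurs_within_edges_inside:
  assumes "W \<subseteq> W0"
  shows "occurs_within \<sigma> {e \<in> M. e \<subseteq> W0} W \<longleftrightarrow> occurs_within \<sigma> M W"
  using assms by (intro occurs_within_cong) auto

lemma occurs_within_Union_edges_inside: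
  assumes "is_matching \<sigma>"
  shows "occurs_within \<sigma> M W \<longleftrightarrow> occurs_within \<sigma> M (\<Union>{e \<in> M. e \<subseteq> W})"
proof
  assume "occurs_within \<sigma> M W"
  then obtain g where g: "strict_mono_on {..<2 * card \<sigma>} g" "g ` {..<2 * card \<sigma>} \<subseteq> W"
     "\<forall>p<2 * card \<sigma>. \<forall>q<2 * card \<sigma>. {g p, g q} \<in> M \<longleftrightarrow> {p, q} \<in> \<sigma>"
    unfolding occurs_within_def by blast
  have "g p \<in> \<Union>{e \<in> M. e \<subseteq> W}" if p: "p < 2 * card \<sigma>" for p
  proof -
    have "perfect_matching \<sigma> {..<2 * card \<sigma>}"
      using assms is_matching_iff_perfect_matching by blast
    then obtain q where q: "{p, q} \<in> \<sigma>" "q < 2 * card \<sigma>"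
      using perfect_matching_partner p by (metis lessThan_iff)
    then have "{g p, g q} \<in> M" "{g p, g q} \<subseteq> W" using g(2,3) p by auto
    then show ?thesis by blast
  qed
  then show "occurs_within \<sigma> M (\<Union>{e \<in> M. e \<subseteq> W})"
    using g(1,3) unfolding occurs_within_def by (intro exI[of _ g]) auto
qed (rule occurs_within_mono, auto)

lemma occurs_within_relabel_if:
  assumes "strict_mono_on S h" "\<Union>E \<subseteq> S" "W \<subseteq> S" "occurs_within \<sigma> E W"
  shows "occurs_within \<sigma> (relabel h E) (h ` W)"
proof -
  obtain g where g: "strict_mono_on {..<2 * card \<sigma>} g" "g ` {..<2 * card \<sigma>} \<subseteq> W"
     "\<forall>p<2 * card \<sigma>. \<forall>q<2 * card \<sigma>. {g p, g q} \<in> E \<longleftrightarrow> {p, q} \<in> \<sigma>"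
    using assms(4) unfolding occurs_within_def by blast
  have inj: "inj_on h S" using assms(1) strict_mono_on_imp_inj_on by blast
  have "strict_mono_on {..<2 * card \<sigma>} (h \<circ> g)"
    using g(1,2) assms(1,3) by (auto simp: strict_mono_on_def subset_iff)
  moreover have "{h (g p), h (g q)} \<in> relabel h E \<longleftrightarrow> {p, q} \<in> \<sigma>"
    if "p < 2 * card \<sigma>" "q < 2 * card \<sigma>" for p q
    using relabel_mem_iff[OF inj assms(2), of "{g p, g q}"] g(2,3) assms(3) that by auto
  ultimately show ?thesis
    using g(2) unfolding occurs_within_def by (intro exI[of _ "h \<circ> g"]) auto
qed

lemma occurs_within_relabel:
  assumes "strict_mono_on S h" "\<Union>E \<subseteq> S" "W \<subseteq> S"
  shows "occurs_within \<sigma> (relabel h E) (h ` W) \<longleftrightarrow> occurs_within \<sigma> E W"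
proof
  have inj: "inj_on h S" using assms(1) strict_mono_on_imp_inj_on by blast
  assume "occurs_within \<sigma> (relabel h E) (h ` W)"
  then have "occurs_within \<sigma> (relabel (inv_into S h) (relabel h E)) (inv_into S h ` h ` W)"
    using assms by (intro occurs_within_relabel_if[OF strict_mono_on_inv_into[OF assms(1)]]) auto
  then show "occurs_within \<sigma> E W"
    using relabel_inv_into[OF inj assms(2)] inv_into_image_cancel[OF inj assms(3)] by simp
qed (rule occurs_within_relabel_if[OF assms])

lemma occurs_within_standardize:
  assumes "finite (\<Union>E)" "W \<subseteq> {..<card (\<Union>E)}"
  shows "occurs_within \<sigma> (standardize E) W \<longleftrightarrow> occurs_within \<sigma> E (enumerate (\<Union>E) ` W)"
proof -
  have "\<Union>(standardize E) \<subseteq> {..<card (\<Union>E)}"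
    using bij_betw_inv_into[OF finite_bij_enumerate[OF assms(1)]]
    unfolding standardize_def bij_betw_def by simp
  then show ?thesis
    using occurs_within_relabel[OF strict_mono_on_enumerate[OF assms(1)] _ assms(2)]
      relabel_enumerate_standardize[OF assms(1)] by metis
qed

lemma occurs_within_standardize_edges_inside:
  assumes "finite (\<Union>{e \<in> M. e \<subseteq> W0})" "W \<subseteq> {..<card (\<Union>{e \<in> M. e \<subseteq> W0})}"
  shows "occurs_within \<sigma> (standardize {e \<in> M. e \<subseteq> W0}) W
    \<longleftrightarrow> occurs_within \<sigma> M (enumerate (\<Union>{e \<in> M. e \<subseteq> W0}) ` W)"
proof -
  have "enumerate (\<Union>{e \<in> M. e \<subseteq> W0}) ` W \<subseteq> \<Union>{e \<in> M. e \<subseteq> W0}"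
    using assms(2) finite_enumerate_in_set[OF assms(1)] by (auto simp: subset_iff)
  also have "\<dots> \<subseteq> W0" by blast
  finally show ?thesis using occurs_within_standardize[OF assms] occurs_within_edges_inside by blast
qed

lemma delete_rightmost_eq:
  assumes "is_matching L" "L \<noteq> {}"
  obtains a where "{a, 2 * card L - 1} \<in> L" "a < 2 * card L - 1"
    "delete_rightmost L = relabel (\<lambda>x. if x < a then x else x - 1) (L - {{a, 2 * card L - 1}})"
proof -
  let ?N = "2 * card L"
  have pm: "perfect_matching L {..<?N}" using assms(1) is_matching_iff_perfect_matching by blast
  have "card L \<noteq> 0" using assms is_matching_def by simp
  then obtain a where a: "{?N - 1, a} \<in> L" "a \<noteq> ?N - 1" "a \<in> {..<?N}"
    using perfect_matching_partner[OF pm, of "?N - 1"] by auto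
  have a': "{a, ?N - 1} \<in> L" "a < ?N - 1" using a by (auto simp: insert_commute)
  have "rightmost_edge L = {a, ?N - 1}"
    unfolding rightmost_edge_def
    by (rule the_equality) (use a' perfect_matching_edge_unique[OF pm _ a'(1)] in auto)
  moreover have "Min {a, ?N - 1} = a" using a' by auto
  ultimately have "delete_rightmost L = relabel (\<lambda>x. if x < a then x else x - 1) (L - {{a, ?N - 1}})"
    unfolding delete_rightmost_def relabel_def Let_def by simp
  then show ?thesis by (rule that[OF a'])
qed

lemma image_skip_lessThan:
  assumes "a \<le> m"
  shows "(\<lambda>x. if x < a then x else Suc x) ` {..<m} = {..<Suc m} - {a}"
proof
  show "{..<Suc m} - {a} \<subseteq> (\<lambda>x. if x < a then x else Suc x) ` {..<m}"
  proof
    fix z assume z: "z \<in> {..<Suc m} - {a}"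
    show "z \<in> (\<lambda>x. if x < a then x else Suc x) ` {..<m}"
    proof (cases "z < a")
      case False
      then show ?thesis using z by (intro image_eqI[of _ _ "z - 1"]) auto
    qed (use z assms in auto)
  qed
qed (use assms in auto)

lemma relabel_skip_relabel_close:
  assumes "a \<notin> \<Union>E"
  shows "relabel (\<lambda>x. if x < a then x else Suc x) (relabel (\<lambda>x. if x < a then x else x - 1) E) = E"
proof -
  let ?h = "\<lambda>x. if x < a then x else Suc x" and ?r = "\<lambda>x. if x < a then x else x - 1"
  have hr: "?h (?r z) = z" if "z \<noteq> a" for z using that by auto
  have "?h ` ?r ` e = e" if "e \<in> E" for e
  proof -
    have "a \<notin> e" using assms that by blast
    then have "(\<lambda>z. ?h (?r z)) ` e = (\<lambda>z. z) ` e" by (intro image_cong refl hr) blast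
    then show ?thesis by (simp only: image_image image_ident)
  qed
  then show ?thesis unfolding relabel_def image_image by simp
qed

lemma contains_delete_rightmost_iff:
  assumes "is_matching L" "L \<noteq> {}" "is_matching \<sigma>"
  shows "contains (delete_rightmost L) \<sigma> \<longleftrightarrow> occurs_within \<sigma> L {..<2 * card L - 1}"
proof -
  let ?N = "2 * card L"
  obtain a where a: "{a, ?N - 1} \<in> L" "a < ?N - 1"
    and D: "delete_rightmost L = relabel (\<lambda>x. if x < a then x else x - 1) (L - {{a, ?N - 1}})"
    using delete_rightmost_eq[OF assms(1,2)] by blast
  define h where "h x = (if x < a then x else Suc x)" for x
  have pm: "perfect_matching L {..<?N}" using assms(1) is_matching_iff_perfect_matching by blast
  have sm: "strict_mono_on UNIV h" unfolding h_def by (rule strict_mono_onI) auto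
  have avoid: "a \<notin> e" if "e \<in> L - {{a, ?N - 1}}" for e
    using that perfect_matching_edge_unique[OF pm _ a(1)] by blast
  then have L': "relabel h (delete_rightmost L) = L - {{a, ?N - 1}}"
    unfolding D h_def by (intro relabel_skip_relabel_close) blast
  have "card (delete_rightmost L) = card L - 1"
    using card_relabel[OF strict_mono_on_imp_inj_on[OF sm], of "delete_rightmost L"] L' a(1)
      perfect_matching_card(1)[OF pm] by simp
  then have "contains (delete_rightmost L) \<sigma>
      \<longleftrightarrow> occurs_within \<sigma> (delete_rightmost L) {..<?N - 2}"
    unfolding contains_iff_occurs_within by (simp add: right_diff_distrib')
  also have "\<dots> \<longleftrightarrow> occurs_within \<sigma> (L - {{a, ?N - 1}}) (h ` {..<?N - 2})"
    using occurs_within_relabel[OF sm] L' by (metis subset_UNIV)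
  also have "Suc (?N - 2) = ?N - 1" using a(2) by simp
  then have "h ` {..<?N - 2} = {..<?N - 1} - {a}"
    using image_skip_lessThan[of a "?N - 2"] a(2) unfolding h_def by simp
  also have "occurs_within \<sigma> (L - {{a, ?N - 1}}) ({..<?N - 1} - {a})
      \<longleftrightarrow> occurs_within \<sigma> L ({..<?N - 1} - {a})"
    by (rule occurs_within_cong) auto
  also have "\<dots> \<longleftrightarrow> occurs_within \<sigma> L {..<?N - 1}"
  proof
    assume "occurs_within \<sigma> L {..<?N - 1}"
    then have "occurs_within \<sigma> L (\<Union>{e \<in> L. e \<subseteq> {..<?N - 1}})"
      using occurs_within_Union_edges_inside[OF assms(3)] by blast
    moreover have "\<Union>{e \<in> L. e \<subseteq> {..<?N - 1}} \<subseteq> {..<?N - 1} - {a}"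
      using avoid by fastforce
    ultimately show "occurs_within \<sigma> L ({..<?N - 1} - {a})" by (rule occurs_within_mono)
  qed (rule occurs_within_mono, auto)
  finally show ?thesis .
qed

section \<open>Juxtaposition\<close>

lemma juxt_eq_relabel: "juxt \<sigma> \<tau> = \<sigma> \<union> relabel (\<lambda>x. x + 2 * card \<sigma>) \<tau>"
  unfolding juxt_def relabel_def ..

lemma is_matching_juxt:
  assumes "is_matching \<sigma>" "is_matching \<tau>"
  shows "is_matching (juxt \<sigma> \<tau>)" "card (juxt \<sigma> \<tau>) = card \<sigma> + card \<tau>"
proof -
  let ?shift = "\<lambda>x. x + 2 * card \<sigma>"
  have "perfect_matching (relabel ?shift \<tau>) (?shift ` {..<2 * card \<tau>})"
    using assms(2) is_matching_iff_perfect_matching by (intro perfect_matching_relabel) auto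
  moreover have "?shift ` {..<2 * card \<tau>} = {2 * card \<sigma>..<2 * (card \<sigma> + card \<tau>)}"
    by (simp add: lessThan_atLeast0 algebra_simps)
  ultimately have "perfect_matching (juxt \<sigma> \<tau>) ({..<2 * card \<sigma>} \<union> {2 * card \<sigma>..<2 * (card \<sigma> + card \<tau>)})"
    unfolding juxt_eq_relabel using assms(1) is_matching_iff_perfect_matching
    by (intro perfect_matching_Un) auto
  moreover have "{..<2 * card \<sigma>} \<union> {2 * card \<sigma>..<2 * (card \<sigma> + card \<tau>)} = {..<2 * (card \<sigma> + card \<tau>)}"
    by auto
  ultimately have "perfect_matching (juxt \<sigma> \<tau>) {..<2 * (card \<sigma> + card \<tau>)}" by metis
  then show "is_matching (juxt \<sigma> \<tau>)" "card (juxt \<sigma> \<tau>) = card \<sigma> + card \<tau>"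
    by (rule is_matching_if_perfect_matching)+
qed

lemma juxt_edge_iff:
  assumes "is_matching \<sigma>"
  shows "{p, q} \<in> juxt \<sigma> \<tau> \<longleftrightarrow> p < 2 * card \<sigma> \<and> q < 2 * card \<sigma> \<and> {p, q} \<in> \<sigma>
    \<or> 2 * card \<sigma> \<le> p \<and> 2 * card \<sigma> \<le> q \<and> {p - 2 * card \<sigma>, q - 2 * card \<sigma>} \<in> \<tau>"
proof -
  let ?s = "2 * card \<sigma>"
  have "{p, q} \<in> \<sigma> \<Longrightarrow> p < ?s \<and> q < ?s"
    using assms unfolding is_matching_def by blast
  moreover have "{p, q} \<in> relabel (\<lambda>x. x + ?s) \<tau> \<longleftrightarrow> ?s \<le> p \<and> ?s \<le> q \<and> {p - ?s, q - ?s} \<in> \<tau>"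
  proof
    assume "{p, q} \<in> relabel (\<lambda>x. x + ?s) \<tau>"
    then obtain e where e: "e \<in> \<tau>" "(\<lambda>x. x + ?s) ` e = {p, q}" unfolding relabel_def by blast
    have "e = (\<lambda>x. x - ?s) ` (\<lambda>x. x + ?s) ` e" by (simp add: image_image)
    also have "\<dots> = {p - ?s, q - ?s}" using e(2) by simp
    moreover have "p \<in> (\<lambda>x. x + ?s) ` e" "q \<in> (\<lambda>x. x + ?s) ` e" using e(2) by auto
    ultimately show "?s \<le> p \<and> ?s \<le> q \<and> {p - ?s, q - ?s} \<in> \<tau>" using e by auto
  next
    assume "?s \<le> p \<and> ?s \<le> q \<and> {p - ?s, q - ?s} \<in> \<tau>"
    moreover have "(\<lambda>x. x + ?s) ` {p - ?s, q - ?s} = {p, q}" using calculation by auto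
    ultimately show "{p, q} \<in> relabel (\<lambda>x. x + ?s) \<tau>" unfolding relabel_def by (metis imageI)
  qed
  ultimately show ?thesis unfolding juxt_eq_relabel by auto
qed

lemma occurs_within_split_if_contains_juxt:
  assumes "is_matching \<sigma>" "contains M (juxt \<sigma> \<tau>)" "card (juxt \<sigma> \<tau>) = card \<sigma> + card \<tau>"
  obtains c where "c \<le> 2 * card M" "occurs_within \<sigma> M {..<c}" "occurs_within \<tau> M {c..<2 * card M}"
proof -
  let ?s = "2 * card \<sigma>" and ?t = "2 * card \<tau>"
  obtain G where G: "strict_mono_on {..<?s + ?t} G" "G ` {..<?s + ?t} \<subseteq> {..<2 * card M}"
    "\<forall>p<?s + ?t. \<forall>q<?s + ?t. {G p, G q} \<in> M \<longleftrightarrow> {p, q} \<in> juxt \<sigma> \<tau>"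
    using assms(2,3) unfolding contains_def by (auto simp: algebra_simps)
  define c where "c = (if ?s = 0 then 0 else Suc (G (?s - 1)))"
  have Gc: "G p < c" if "p < ?s" for p
  proof -
    have "G p \<le> G (?s - 1)" using that strict_mono_on_less_eq[OF G(1), of p "?s - 1"] by simp
    then show ?thesis using that unfolding c_def by simp
  qed
  have cG: "c \<le> G (q + ?s)" if "q < ?t" for q
  proof (cases "?s = 0")
    case False
    then have "G (?s - 1) < G (q + ?s)" using that by (intro strict_mono_onD[OF G(1)]) auto
    then show ?thesis unfolding c_def by simp
  qed (simp add: c_def)
  have "occurs_within \<sigma> M {..<c}"
    unfolding occurs_within_def
  proof (intro exI conjI)
    show "strict_mono_on {..<?s} G" using G(1) by (auto simp: strict_mono_on_def)
    show "G ` {..<?s} \<subseteq> {..<c}" using Gc by auto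
    show "\<forall>p<?s. \<forall>q<?s. {G p, G q} \<in> M \<longleftrightarrow> {p, q} \<in> \<sigma>"
      using G(3) juxt_edge_iff[OF assms(1)] by auto
  qed
  moreover have "occurs_within \<tau> M {c..<2 * card M}"
    unfolding occurs_within_def
  proof (intro exI conjI)
    show "strict_mono_on {..<?t} (\<lambda>q. G (q + ?s))" using G(1) by (auto simp: strict_mono_on_def)
    have "G (q + ?s) < 2 * card M" if "q < ?t" for q
      using G(2) that by (auto simp: image_subset_iff)
    then show "(\<lambda>q. G (q + ?s)) ` {..<?t} \<subseteq> {c..<2 * card M}" using cG by auto
    show "\<forall>p<?t. \<forall>q<?t. {G (p + ?s), G (q + ?s)} \<in> M \<longleftrightarrow> {p, q} \<in> \<tau>"
      using G(3) juxt_edge_iff[OF assms(1)] by auto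
  qed
  moreover have "c \<le> 2 * card M"
    using G(2) unfolding c_def by (auto simp: image_subset_iff Suc_le_eq)
  ultimately show ?thesis using that by blast
qed

lemma strict_mono_on_concat:
  fixes a b :: nat and g h :: "nat \<Rightarrow> 'a::order"
  assumes "strict_mono_on {..<a} g" "strict_mono_on {..<b} h" "\<And>p q. p < a \<Longrightarrow> q < b \<Longrightarrow> g p < h q"
  shows "strict_mono_on {..<a + b} (\<lambda>p. if p < a then g p else h (p - a))"
proof (rule strict_mono_onI)
  fix p q assume pq: "p \<in> {..<a + b}" "q \<in> {..<a + b}" "p < q"
  show "(if p < a then g p else h (p - a)) < (if q < a then g q else h (q - a))"
  proof (cases "q < a")
    case True
    moreover have "p < a" using True pq(3) by simp
    ultimately show ?thesis using pq strict_mono_onD[OF assms(1)] by auto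
  next
    case False
    then have "q - a < b" using pq(2) by auto
    then show ?thesis using pq False assms(3) strict_mono_onD[OF assms(2), of "p - a" "q - a"] by auto
  qed
qed

lemma occurrence_partner_in_image:
  assumes "is_matching \<sigma>" "perfect_matching M V"
    and "\<forall>p<2 * card \<sigma>. \<forall>q<2 * card \<sigma>. {g p, g q} \<in> M \<longleftrightarrow> {p, q} \<in> \<sigma>"
    and "p < 2 * card \<sigma>" "{g p, x} \<in> M"
  shows "x \<in> g ` {..<2 * card \<sigma>}"
proof -
  have "perfect_matching \<sigma> {..<2 * card \<sigma>}" using assms(1) is_matching_iff_perfect_matching by blast
  then obtain r where r: "{p, r} \<in> \<sigma>" "r < 2 * card \<sigma>"
    using perfect_matching_partner assms(4) by (metis lessThan_iff)
  then have "{g p, g r} = {g p, x}"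
    using assms(3,4) perfect_matching_edge_unique[OF assms(2) _ assms(5)] by blast
  then show ?thesis using r(2) assms(4) by (auto simp: doubleton_eq_iff)
qed

lemma contains_juxt_if_occurs_within_split:
  assumes "is_matching \<sigma>" "is_matching M" "card (juxt \<sigma> \<tau>) = card \<sigma> + card \<tau>"
    and "occurs_within \<sigma> M {..<c}" "occurs_within \<tau> M {c..<2 * card M}" "c \<le> 2 * card M"
  shows "contains M (juxt \<sigma> \<tau>)"
proof -
  let ?s = "2 * card \<sigma>" and ?t = "2 * card \<tau>"
  obtain g where g: "strict_mono_on {..<?s} g" "g ` {..<?s} \<subseteq> {..<c}"
     "\<forall>p<?s. \<forall>q<?s. {g p, g q} \<in> M \<longleftrightarrow> {p, q} \<in> \<sigma>"
    using assms(4) unfolding occurs_within_def by blast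
  obtain h where h: "strict_mono_on {..<?t} h" "h ` {..<?t} \<subseteq> {c..<2 * card M}"
     "\<forall>p<?t. \<forall>q<?t. {h p, h q} \<in> M \<longleftrightarrow> {p, q} \<in> \<tau>"
    using assms(5) unfolding occurs_within_def by blast
  have gc: "g p < c" if "p < ?s" for p using g(2) that by auto
  have hc: "c \<le> h q" "h q < 2 * card M" if "q < ?t" for q using h(2) that by auto
  have pm: "perfect_matching M {..<2 * card M}" using assms(2) is_matching_iff_perfect_matching by blast
  have mixed: "{g p, h q} \<notin> M" if "p < ?s" "q < ?t" for p q
    using occurrence_partner_in_image[OF assms(1) pm g(3) that(1), of "h q"] g(2) hc(1)[OF that(2)] by force
  define G where "G p = (if p < ?s then g p else h (p - ?s))" for p
  have "strict_mono_on {..<?s + ?t} G"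
    unfolding G_def using gc hc(1) by (intro strict_mono_on_concat[OF g(1) h(1)]) force
  moreover have "G ` {..<?s + ?t} \<subseteq> {..<2 * card M}"
    using gc hc(2) assms(6) unfolding G_def by (auto simp: image_subset_iff intro: less_le_trans)
  moreover have "{G p, G q} \<in> M \<longleftrightarrow> {p, q} \<in> juxt \<sigma> \<tau>"
    if "p < ?s + ?t" "q < ?s + ?t" for p q
  proof -
    consider "p < ?s" "q < ?s" | "p < ?s" "?s \<le> q" | "?s \<le> p" "q < ?s" | "?s \<le> p" "?s \<le> q"
      by linarith
    then show ?thesis
    proof cases
      case 2
      then show ?thesis using mixed[of p "q - ?s"] that juxt_edge_iff[OF assms(1)] by (simp add: G_def)
    next
      case 3
      then show ?thesis
        using mixed[of q "p - ?s"] that juxt_edge_iff[OF assms(1)] by (simp add: G_def insert_commute)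
    qed (use that g(3) h(3) juxt_edge_iff[OF assms(1)] in \<open>auto simp: G_def\<close>)
  qed
  ultimately show ?thesis
    unfolding contains_def assms(3) by (intro exI[of _ G]) (auto simp: algebra_simps)
qed

lemma contains_juxt_iff:
  assumes "is_matching \<sigma>" "is_matching \<tau>" "is_matching M"
  shows "contains M (juxt \<sigma> \<tau>) \<longleftrightarrow>
    (\<exists>c\<le>2 * card M. occurs_within \<sigma> M {..<c} \<and> occurs_within \<tau> M {c..<2 * card M})"
  using occurs_within_split_if_contains_juxt[OF assms(1) _ is_matching_juxt(2)[OF assms(1,2)]]
    contains_juxt_if_occurs_within_split[OF assms(1,3) is_matching_juxt(2)[OF assms(1,2)]]
  by metis

section \<open>Matchings between two disjoint sets\<close>

definition cross_matching :: "'a set \<Rightarrow> 'a set \<Rightarrow> 'a set set \<Rightarrow> bool" where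
  "cross_matching X Y C \<longleftrightarrow> perfect_matching C (X \<union> Y) \<and> (\<forall>e\<in>C. \<exists>x\<in>X. \<exists>y\<in>Y. e = {x, y})"

lemma cross_matching_edgeE:
  assumes "cross_matching X Y C" "e \<in> C"
  obtains x y where "x \<in> X" "y \<in> Y" "e = {x, y}"
  using assms unfolding cross_matching_def by meson

lemma cross_matching_empty: "cross_matching {} {} C \<longleftrightarrow> C = {}"
  unfolding cross_matching_def perfect_matching_def by auto

lemma finite_cross_matchings:
  assumes "finite X" "finite Y"
  shows "finite {C. cross_matching X Y C}"
proof (rule finite_subset)
  show "{C. cross_matching X Y C} \<subseteq> Pow (Pow (X \<union> Y))"
    unfolding cross_matching_def perfect_matching_def by auto
qed (use assms in simp)

lemma cross_matching_sym: "cross_matching X Y C \<Longrightarrow> cross_matching Y X C"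
  unfolding cross_matching_def by (metis Un_commute insert_commute)

lemma cross_matching_insert:
  assumes "cross_matching (X - {x}) (Y - {y}) C" "x \<in> X" "y \<in> Y" "X \<inter> Y = {}"
  shows "cross_matching X Y (insert {x, y} C)"
proof -
  have "x \<noteq> y" using assms(2-4) by blast
  then have "perfect_matching {{x, y}} {x, y}" unfolding perfect_matching_def by auto
  then have "perfect_matching ({{x, y}} \<union> C) ({x, y} \<union> ((X - {x}) \<union> (Y - {y})))"
    using assms unfolding cross_matching_def by (intro perfect_matching_Un) auto
  moreover have "{x, y} \<union> ((X - {x}) \<union> (Y - {y})) = X \<union> Y" using assms(2,3) by auto
  moreover have "\<forall>e\<in>C. \<exists>a\<in>X. \<exists>b\<in>Y. e = {a, b}"
    using assms(1) unfolding cross_matching_def by (meson DiffD1)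
  ultimately show ?thesis using assms(2,3) unfolding cross_matching_def by auto
qed

lemma cross_matching_remove:
  assumes "cross_matching X Y C" "x \<in> X" "X \<inter> Y = {}"
  obtains y where "y \<in> Y" "{x, y} \<in> C" "cross_matching (X - {x}) (Y - {y}) (C - {{x, y}})"
proof -
  have pm: "perfect_matching C (X \<union> Y)" using assms(1) unfolding cross_matching_def by simp
  obtain y where xy: "{x, y} \<in> C" "y \<noteq> x" using perfect_matching_partner[OF pm] assms(2) by blast
  then obtain a b where "a \<in> X" "b \<in> Y" "{x, y} = {a, b}"
    using cross_matching_edgeE[OF assms(1)] by blast
  then have y: "y \<in> Y" using xy(2) assms(2,3) by (auto simp: doubleton_eq_iff)
  have "\<Union>(C - {{x, y}}) \<inter> \<Union>{{x, y}} = {}"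
    using xy(1) by (intro perfect_matching_Union_disjoint[OF pm]) auto
  then have "\<Union>(C - {{x, y}}) = \<Union>C - {x, y}" using xy(1) by auto
  also have "\<dots> = (X - {x}) \<union> (Y - {y})"
    using pm assms(2,3) y unfolding perfect_matching_def by auto
  finally have "\<Union>(C - {{x, y}}) = (X - {x}) \<union> (Y - {y})" .
  moreover have "\<exists>a\<in>X - {x}. \<exists>b\<in>Y - {y}. e = {a, b}" if e: "e \<in> C - {{x, y}}" for e
  proof -
    obtain a b where "a \<in> X" "b \<in> Y" "e = {a, b}" using cross_matching_edgeE[OF assms(1)] e by blast
    moreover have "e \<inter> {x, y} = {}" using e xy(1) by (intro perfect_matching_edge_disjoint[OF pm]) auto
    ultimately show ?thesis by blast
  qed
  ultimately have "cross_matching (X - {x}) (Y - {y}) (C - {{x, y}})"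
    using perfect_matching_subset[OF pm] unfolding cross_matching_def by (metis Diff_subset)
  then show ?thesis using that y xy(1) by blast
qed

lemma edge_notin_cross_matching: "cross_matching X Y C \<Longrightarrow> x \<notin> X \<Longrightarrow> x \<notin> Y \<Longrightarrow> {x, y} \<notin> C"
  unfolding cross_matching_def perfect_matching_def by blast

lemma cross_matchings_eq_UN:
  assumes "x \<in> X" "X \<inter> Y = {}"
  shows "{C. cross_matching X Y C} = (\<Union>y\<in>Y. insert {x, y} ` {C. cross_matching (X - {x}) (Y - {y}) C})"
proof
  show "{C. cross_matching X Y C} \<subseteq> (\<Union>y\<in>Y. insert {x, y} ` {C. cross_matching (X - {x}) (Y - {y}) C})"
  proof
    fix C assume "C \<in> {C. cross_matching X Y C}"
    then have "cross_matching X Y C" by simp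
    then obtain y where y: "y \<in> Y" "{x, y} \<in> C"
      and C': "cross_matching (X - {x}) (Y - {y}) (C - {{x, y}})"
      by (rule cross_matching_remove[OF _ assms])
    have "C \<in> insert {x, y} ` {C. cross_matching (X - {x}) (Y - {y}) C}"
      by (rule image_eqI[of _ _ "C - {{x, y}}"]) (use y(2) C' in auto)
    then show "C \<in> (\<Union>y\<in>Y. insert {x, y} ` {C. cross_matching (X - {x}) (Y - {y}) C})"
      using y(1) by blast
  qed
qed (use cross_matching_insert assms in auto)

lemma card_cross_matchings:
  "finite X \<Longrightarrow> finite Y \<Longrightarrow> X \<inter> Y = {} \<Longrightarrow> card X = k \<Longrightarrow> card Y = k
    \<Longrightarrow> card {C. cross_matching X Y C} = fact k"
proof (induction k arbitrary: X Y)
  case 0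
  then have "{C. cross_matching X Y C} = {{}}" using cross_matching_empty by auto
  then show ?case by simp
next
  case (Suc k)
  then obtain x where x: "x \<in> X" by fastforce
  define F where "F y = insert {x, y} ` {C. cross_matching (X - {x}) (Y - {y}) C}" for y
  have notin: "{x, y} \<notin> C" if "cross_matching (X - {x}) (Y - {z}) C" for y z C
    using edge_notin_cross_matching[OF that] x Suc.prems(3) by blast
  have "F y \<inter> F y' = {}" if "y \<noteq> y'" for y y'
  proof (rule ccontr)
    assume "F y \<inter> F y' \<noteq> {}"
    then obtain C C' where C': "cross_matching (X - {x}) (Y - {y'}) C'"
      and eq: "insert {x, y} C = insert {x, y'} C'" unfolding F_def by blast
    have "{x, y} \<in> C'" using eq \<open>y \<noteq> y'\<close> by (metis doubleton_eq_iff insertE insertI1)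
    then show False using notin[OF C'] by blast
  qed
  moreover have "card (F y) = fact k" if "y \<in> Y" for y
  proof -
    have "inj_on (insert {x, y}) {C. cross_matching (X - {x}) (Y - {y}) C}"
      using notin by (intro inj_onI) (metis insert_ident mem_Collect_eq)
    then have "card (F y) = card {C. cross_matching (X - {x}) (Y - {y}) C}"
      unfolding F_def by (rule card_image)
    also have "\<dots> = fact k" using Suc.IH[of "X - {x}" "Y - {y}"] Suc.prems x that by auto
    finally show ?thesis .
  qed
  moreover have "finite (F y)" for y
    unfolding F_def using finite_cross_matchings[of "X - {x}" "Y - {y}"] Suc.prems(1,2) by simp
  ultimately have "card (\<Union>y\<in>Y. F y) = (\<Sum>y\<in>Y. fact k)"
    using card_UN_disjoint[of Y F] Suc.prems(2) by simp
  then show ?case using cross_matchings_eq_UN[OF x Suc.prems(3)] Suc.prems(5) unfolding F_def by simp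
qed

lemma card_cross_matching:
  assumes "cross_matching X Y C" "X \<inter> Y = {}"
  shows "card X = card C"
proof -
  have side: "e \<inter> X = {x}" if e: "e \<in> C" "x \<in> e" "x \<in> X" for e x
  proof -
    obtain a b where "a \<in> X" "b \<in> Y" "e = {a, b}"
      using cross_matching_edgeE[OF assms(1) e(1)] by blast
    then show ?thesis using e(2,3) assms(2) by auto
  qed
  have pm: "perfect_matching C (X \<union> Y)" using assms(1) unfolding cross_matching_def by simp
  have elem: "the_elem (e \<inter> X) \<in> X \<inter> e" if e: "e \<in> C" for e
  proof -
    obtain a b where ab: "a \<in> X" "b \<in> Y" "e = {a, b}" using cross_matching_edgeE[OF assms(1) e] by blast
    then have "e \<inter> X = {a}" using side e by blast
    then have "the_elem (e \<inter> X) = a" by simp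
    then show ?thesis using ab by simp
  qed
  have "bij_betw (\<lambda>e. the_elem (e \<inter> X)) C X"
  proof (rule bij_betw_imageI)
    show "inj_on (\<lambda>e. the_elem (e \<inter> X)) C"
      using elem perfect_matching_edge_unique[OF pm] by (intro inj_onI) (metis IntD2)
    show "(\<lambda>e. the_elem (e \<inter> X)) ` C = X"
    proof
      show "(\<lambda>e. the_elem (e \<inter> X)) ` C \<subseteq> X" using elem by blast
      show "X \<subseteq> (\<lambda>e. the_elem (e \<inter> X)) ` C"
      proof
        fix x assume "x \<in> X"
        then obtain e where e: "e \<in> C" "x \<in> e" using pm unfolding perfect_matching_def by blast
        then have "x = the_elem (e \<inter> X)" using side[OF e \<open>x \<in> X\<close>] by simp
        then show "x \<in> (\<lambda>e. the_elem (e \<inter> X)) ` C" using e(1) by (rule image_eqI)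
      qed
    qed
  qed
  then show ?thesis by (simp add: bij_betw_same_card)
qed

section \<open>Cutting a matching after the first occurrence of a pattern\<close>

definition cut_point :: "nat set set \<Rightarrow> nat set set \<Rightarrow> nat" where
  "cut_point \<sigma> M = (LEAST c. occurs_within \<sigma> M {..<c})"

lemma occurs_within_cut_point:
  assumes "contains M \<sigma>"
  shows "occurs_within \<sigma> M {..<cut_point \<sigma> M}" "cut_point \<sigma> M \<le> 2 * card M"
  using LeastI[of "\<lambda>c. occurs_within \<sigma> M {..<c}"] Least_le[of "\<lambda>c. occurs_within \<sigma> M {..<c}"]
    assms[unfolded contains_iff_occurs_within]
  unfolding cut_point_def by simp_all

lemma not_occurs_within_below_cut_point: "c < cut_point \<sigma> M \<Longrightarrow> \<not> occurs_within \<sigma> M {..<c}"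
  unfolding cut_point_def by (rule not_less_Least)

lemma cut_point_pos: "card \<sigma> \<noteq> 0 \<Longrightarrow> contains M \<sigma> \<Longrightarrow> 0 < cut_point \<sigma> M"
  using occurs_within_cut_point(1) not_occurs_within_empty by (metis gr0I lessThan_0)

lemma cut_point_eqI:
  assumes "occurs_within \<sigma> M {..<c}" "\<not> occurs_within \<sigma> M {..<c - 1}" "0 < c"
  shows "cut_point \<sigma> M = c"
  unfolding cut_point_def
proof (rule Least_equality)
  fix c' assume "occurs_within \<sigma> M {..<c'}"
  then show "c \<le> c'" using assms(2,3) occurs_within_mono[of \<sigma> M "{..<c'}" "{..<c - 1}"] by fastforce
qed (fact assms(1))

definition edges_below :: "nat \<Rightarrow> nat set set \<Rightarrow> nat set set" where
  "edges_below c M = {e \<in> M. e \<subseteq> {..<c}}"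

definition edges_above :: "nat \<Rightarrow> nat set set \<Rightarrow> nat set set" where
  "edges_above c M = {e \<in> M. e \<subseteq> {c..}}"

definition edges_across :: "nat \<Rightarrow> nat set set \<Rightarrow> nat set set" where
  "edges_across c M = {e \<in> M. \<not> e \<subseteq> {..<c} \<and> \<not> e \<subseteq> {c..}}"

lemma last_vertex_below_cut_point:
  assumes "is_matching \<sigma>" "card \<sigma> \<noteq> 0" "contains M \<sigma>"
  shows "cut_point \<sigma> M - 1 \<in> \<Union>(edges_below (cut_point \<sigma> M) M)"
proof (rule ccontr)
  let ?c = "cut_point \<sigma> M"
  assume last: "?c - 1 \<notin> \<Union>(edges_below ?c M)"
  have "\<Union>(edges_below ?c M) \<subseteq> {..<?c - 1}"
  proof
    fix x assume "x \<in> \<Union>(edges_below ?c M)"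
    then have "x < ?c" "x \<noteq> ?c - 1" using last unfolding edges_below_def by auto
    then show "x \<in> {..<?c - 1}" by simp
  qed
  moreover have "occurs_within \<sigma> M (\<Union>(edges_below ?c M))"
    using occurs_within_cut_point(1)[OF assms(3)] occurs_within_Union_edges_inside[OF assms(1)]
    unfolding edges_below_def by blast
  ultimately have "occurs_within \<sigma> M {..<?c - 1}" by (rule occurs_within_mono[rotated])
  then show False using not_occurs_within_below_cut_point cut_point_pos[OF assms(2,3)] by simp
qed

lemma occurs_within_lessThan_iff_edges_below:
  assumes "is_matching \<sigma>" "c' \<le> c"
  shows "occurs_within \<sigma> M {..<c'} \<longleftrightarrow> occurs_within \<sigma> M (\<Union>(edges_below c M) \<inter> {..<c'})"
proof
  assume "occurs_within \<sigma> M {..<c'}"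
  then have "occurs_within \<sigma> M (\<Union>{e \<in> M. e \<subseteq> {..<c'}})"
    using occurs_within_Union_edges_inside[OF assms(1)] by blast
  moreover have "\<Union>{e \<in> M. e \<subseteq> {..<c'}} \<subseteq> \<Union>(edges_below c M) \<inter> {..<c'}"
    using assms(2) unfolding edges_below_def by fastforce
  ultimately show "occurs_within \<sigma> M (\<Union>(edges_below c M) \<inter> {..<c'})" by (rule occurs_within_mono)
qed (rule occurs_within_mono, auto)

lemma minimally_contains_standardize_edges_below:
  assumes "is_matching \<sigma>" "card \<sigma> \<noteq> 0" "perfect_matching M V" "finite V"
    and last: "c - 1 \<in> \<Union>(edges_below c M)"
  shows "minimally_contains (standardize (edges_below c M)) \<sigma>
    \<longleftrightarrow> occurs_within \<sigma> M {..<c} \<and> \<not> occurs_within \<sigma> M {..<c - 1}"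
proof -
  let ?I = "edges_below c M"
  let ?A = "\<Union>?I" and ?L = "standardize ?I"
  have pmI: "perfect_matching ?I ?A"
    by (rule perfect_matching_subset[OF assms(3)]) (simp add: edges_below_def)
  have A: "?A \<subseteq> {..<c}" unfolding edges_below_def by blast
  have "?A \<subseteq> V" using perfect_matching_edge_subset[OF assms(3)] unfolding edges_below_def by auto
  then have fA: "finite ?A" using assms(4) by (rule finite_subset)
  have L: "is_matching ?L" "card ?L = card ?I" using is_matching_standardize[OF pmI fA] by auto
  then have cA: "card ?A = 2 * card ?L" using perfect_matching_card(2)[OF pmI fA] by simp
  then have "?L \<noteq> {}" using last fA by auto
  have transfer: "occurs_within \<sigma> ?L W \<longleftrightarrow> occurs_within \<sigma> M (enumerate ?A ` W)"
    if "W \<subseteq> {..<card ?A}" for W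
    using occurs_within_standardize_edges_inside[of M "{..<c}" W] fA that
    unfolding edges_below_def by simp
  have "occurs_within \<sigma> M {..<c - 1} \<longleftrightarrow> contains (delete_rightmost ?L) \<sigma>"
    using occurs_within_lessThan_iff_edges_below[OF assms(1), of "c - 1" c M]
      enumerate_image_drop_last[OF fA A last] transfer[of "{..<card ?A - 1}"]
      contains_delete_rightmost_iff[OF L(1) \<open>?L \<noteq> {}\<close> assms(1)] cA by simp
  moreover have "enumerate ?A ` {..<card ?A} = ?A \<inter> {..<c}"
    using finite_bij_enumerate[OF fA] A unfolding bij_betw_def by auto
  then have "occurs_within \<sigma> M {..<c} \<longleftrightarrow> contains ?L \<sigma>"
    using occurs_within_lessThan_iff_edges_below[OF assms(1), of c c M] transfer[of "{..<card ?A}"]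
    unfolding contains_iff_occurs_within cA by simp
  ultimately show ?thesis unfolding minimally_contains_def using \<open>?L \<noteq> {}\<close> by blast
qed

lemma contains_juxt_iff_occurs_within_after_cut_point:
  assumes "is_matching \<sigma>" "is_matching \<tau>" "is_matching M" "contains M \<sigma>"
  shows "contains M (juxt \<sigma> \<tau>) \<longleftrightarrow> occurs_within \<tau> M {cut_point \<sigma> M..<2 * card M}"
proof
  assume "contains M (juxt \<sigma> \<tau>)"
  then obtain c where "occurs_within \<sigma> M {..<c}" "occurs_within \<tau> M {c..<2 * card M}"
    using contains_juxt_iff[OF assms(1-3)] by blast
  moreover from this(1) have "cut_point \<sigma> M \<le> c" unfolding cut_point_def by (rule Least_le)
  ultimately show "occurs_within \<tau> M {cut_point \<sigma> M..<2 * card M}"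
    by (elim occurs_within_mono) auto
next
  assume "occurs_within \<tau> M {cut_point \<sigma> M..<2 * card M}"
  then show "contains M (juxt \<sigma> \<tau>)"
    using contains_juxt_iff[OF assms(1-3)] occurs_within_cut_point[OF assms(4)] by blast
qed

lemma contains_juxt_iff_standardize_edges_above:
  assumes "is_matching \<sigma>" "is_matching \<tau>" "is_matching M" "contains M \<sigma>"
  shows "contains M (juxt \<sigma> \<tau>) \<longleftrightarrow> contains (standardize (edges_above (cut_point \<sigma> M) M)) \<tau>"
proof -
  let ?c = "cut_point \<sigma> M"
  let ?O = "edges_above ?c M"
  let ?B = "\<Union>?O"
  have pm: "perfect_matching M {..<2 * card M}" using assms(3) is_matching_iff_perfect_matching by blast
  have pmO: "perfect_matching ?O ?B"
    by (rule perfect_matching_subset[OF pm]) (simp add: edges_above_def)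
  have "?B \<subseteq> {..<2 * card M}" using perfect_matching_edge_subset[OF pm] unfolding edges_above_def by auto
  then have fB: "finite ?B" by (rule finite_subset) simp
  have "{e \<in> M. e \<subseteq> {?c..<2 * card M}} = ?O"
    using perfect_matching_edge_subset[OF pm] unfolding edges_above_def by fastforce
  then have "contains M (juxt \<sigma> \<tau>) \<longleftrightarrow> occurs_within \<tau> M ?B"
    using contains_juxt_iff_occurs_within_after_cut_point[OF assms]
      occurs_within_Union_edges_inside[OF assms(2), of M "{?c..<2 * card M}"] by simp
  also have "\<dots> \<longleftrightarrow> occurs_within \<tau> (standardize ?O) {..<card ?B}"
    using finite_bij_enumerate[OF fB] occurs_within_standardize_edges_inside[of M "{?c..}"] fB
    unfolding edges_above_def bij_betw_def by simp
  also have "\<dots> \<longleftrightarrow> contains (standardize ?O) \<tau>"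
    using perfect_matching_standardize[OF pmO fB] perfect_matching_card(2)[OF pmO fB]
    unfolding contains_iff_occurs_within by simp
  finally show ?thesis .
qed

lemma cross_matching_edges_across:
  assumes "perfect_matching M V"
  shows "cross_matching (\<Union>(edges_across c M) \<inter> {..<c}) (\<Union>(edges_across c M) \<inter> {c..}) (edges_across c M)"
proof -
  let ?C = "edges_across c M"
  have "perfect_matching ?C (\<Union>?C)"
    by (rule perfect_matching_subset[OF assms]) (simp add: edges_across_def)
  moreover have "\<Union>?C = \<Union>?C \<inter> {..<c} \<union> \<Union>?C \<inter> {c..}" by auto
  moreover have "\<exists>x\<in>\<Union>?C \<inter> {..<c}. \<exists>y\<in>\<Union>?C \<inter> {c..}. e = {x, y}" if e: "e \<in> ?C" for e
  proof -
    obtain a b where ab: "e = {a, b}"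
      using perfect_matching_edgeE[OF assms] e unfolding edges_across_def by blast
    then have "a < c \<and> c \<le> b \<or> b < c \<and> c \<le> a" using e unfolding edges_across_def by auto
    then show ?thesis using e ab by (auto simp: insert_commute)
  qed
  ultimately show ?thesis unfolding cross_matching_def by metis
qed

lemma Union_edges_below_above:
  assumes "perfect_matching M {..<N}" "c \<le> N"
  shows "\<Union>(edges_below c M) = {..<c} - \<Union>(edges_across c M)"
    and "\<Union>(edges_above c M) = {c..<N} - \<Union>(edges_across c M)"
proof -
  have "M = edges_below c M \<union> edges_across c M \<union> edges_above c M"
    unfolding edges_below_def edges_above_def edges_across_def by blast
  then have U: "\<Union>(edges_below c M) \<union> \<Union>(edges_across c M) \<union> \<Union>(edges_above c M) = {..<N}"
    using assms(1) unfolding perfect_matching_def by (metis Union_Un_distrib)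
  have D: "\<Union>(edges_below c M) \<inter> \<Union>(edges_across c M) = {}"
    "\<Union>(edges_above c M) \<inter> \<Union>(edges_across c M) = {}"
    by (rule perfect_matching_Union_disjoint[OF assms(1)];
        auto simp: edges_below_def edges_above_def edges_across_def)+
  have S: "\<Union>(edges_below c M) \<subseteq> {..<c}" "\<Union>(edges_above c M) \<subseteq> {c..}"
    unfolding edges_below_def edges_above_def by auto
  have split: "P = {..<c} - Q \<and> R = {c..<N} - Q"
    if PQR: "P \<inter> Q = {}" "R \<inter> Q = {}" "P \<subseteq> {..<c}" "R \<subseteq> {c..}" "P \<union> Q \<union> R = {..<N}"
    for P Q R :: "nat set"
  proof (intro conjI equalityI subsetI)
    fix x assume x: "x \<in> {..<c} - Q"
    then have "x \<in> P \<union> Q \<union> R" using PQR(5) assms(2) by auto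
    then show "x \<in> P" using x PQR(4) by auto
  next
    fix x assume x: "x \<in> {c..<N} - Q"
    then have "x \<in> P \<union> Q \<union> R" using PQR(5) by auto
    then show "x \<in> R" using x PQR(3) by auto
  next
    fix x assume "x \<in> P"
    then show "x \<in> {..<c} - Q" using PQR(1,3) by auto
  next
    fix x assume x: "x \<in> R"
    then have "x < N" using PQR(5) by auto
    then show "x \<in> {c..<N} - Q" using x PQR(2,4) by auto
  qed
  show "\<Union>(edges_below c M) = {..<c} - \<Union>(edges_across c M)"
    and "\<Union>(edges_above c M) = {c..<N} - \<Union>(edges_across c M)"
    using split[OF D S U] by simp_all
qed

lemma edges_at_cut_of_Un:
  assumes "perfect_matching E A" "A \<subseteq> {..<c}" "perfect_matching F B" "B \<subseteq> {c..}"
    and "cross_matching X Y C" "X \<subseteq> {..<c}" "Y \<subseteq> {c..}"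
  shows "edges_below c (E \<union> C \<union> F) = E" "edges_above c (E \<union> C \<union> F) = F"
    "edges_across c (E \<union> C \<union> F) = C"
proof -
  have "e \<subseteq> {..<c} \<and> \<not> e \<subseteq> {c..}" if "e \<in> E" for e
    using perfect_matching_edge_subset[OF assms(1) that] perfect_matching_edge_nonempty[OF assms(1) that]
      assms(2) by fastforce
  moreover have "e \<subseteq> {c..} \<and> \<not> e \<subseteq> {..<c}" if "e \<in> F" for e
    using perfect_matching_edge_subset[OF assms(3) that] perfect_matching_edge_nonempty[OF assms(3) that]
      assms(4) by fastforce
  moreover have "\<not> e \<subseteq> {..<c} \<and> \<not> e \<subseteq> {c..}" if e: "e \<in> C" for e
  proof -
    obtain x y where xy: "x \<in> X" "y \<in> Y" "e = {x, y}" using cross_matching_edgeE[OF assms(5) e] by blast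
    then have "x < c" "c \<le> y" using assms(6,7) by auto
    then show ?thesis using xy(3) by auto
  qed
  ultimately show "edges_below c (E \<union> C \<union> F) = E" "edges_above c (E \<union> C \<union> F) = F"
    "edges_across c (E \<union> C \<union> F) = C"
    unfolding edges_below_def edges_above_def edges_across_def by blast+
qed

lemma perfect_matching_assemble:
  fixes c N :: nat and X Y :: "nat set" and C L V :: "nat set set"
  defines "A \<equiv> {..<c} - X" and "B \<equiv> {c..<N} - Y"
  assumes cN: "c \<le> N" and X: "X \<subseteq> {..<c}" and Y: "Y \<subseteq> {c..<N}" and C: "cross_matching X Y C"
    and L: "perfect_matching L {..<card A}" and V: "perfect_matching V {..<card B}"
  defines "M \<equiv> relabel (enumerate A) L \<union> C \<union> relabel (enumerate B) V"
  shows "perfect_matching M {..<N}" "edges_below c M = relabel (enumerate A) L"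
    "edges_above c M = relabel (enumerate B) V" "edges_across c M = C"
proof -
  have pmA: "perfect_matching (relabel (enumerate A) L) A"
    using perfect_matching_relabel_enumerate(1) L unfolding A_def by blast
  have pmB: "perfect_matching (relabel (enumerate B) V) B"
    using perfect_matching_relabel_enumerate(1) V unfolding B_def by blast
  have "perfect_matching C (X \<union> Y)" using C unfolding cross_matching_def by simp
  moreover have "A \<inter> (X \<union> Y) = {}" using Y unfolding A_def by auto
  ultimately have "perfect_matching (relabel (enumerate A) L \<union> C) (A \<union> (X \<union> Y))"
    using perfect_matching_Un[OF pmA] by blast
  moreover have "(A \<union> (X \<union> Y)) \<inter> B = {}" using X unfolding A_def B_def by auto
  ultimately have "perfect_matching M (A \<union> (X \<union> Y) \<union> B)"
    unfolding M_def using perfect_matching_Un[OF _ pmB] by blast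
  moreover have "A \<union> (X \<union> Y) \<union> B = {..<N}" using cN X Y unfolding A_def B_def by auto
  ultimately show "perfect_matching M {..<N}" by simp
  have "A \<subseteq> {..<c}" "B \<subseteq> {c..}" "Y \<subseteq> {c..}" using Y unfolding A_def B_def by auto
  then show "edges_below c M = relabel (enumerate A) L" "edges_above c M = relabel (enumerate B) V"
    "edges_across c M = C"
    using edges_at_cut_of_Un[OF pmA _ pmB _ C X] unfolding M_def by auto
qed

lemma edges_split_at:
  fixes M :: "nat set set" and c N :: nat
  assumes "perfect_matching M {..<N}" "c \<le> N"
  defines "C \<equiv> edges_across c M"
  defines "X \<equiv> \<Union>C \<inter> {..<c}" and "Y \<equiv> \<Union>C \<inter> {c..}"
  shows "cross_matching X Y C" "X \<subseteq> {..<c}" "Y \<subseteq> {c..<N}" "card Y = card X" "card C = card X"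
    "\<Union>(edges_below c M) = {..<c} - X" "\<Union>(edges_above c M) = {c..<N} - Y"
    "M = edges_below c M \<union> C \<union> edges_above c M"
    "card M = card (edges_below c M) + card X + card (edges_above c M)"
    "2 * card (edges_below c M) + card X = c"
proof -
  show cross: "cross_matching X Y C" using cross_matching_edges_across[OF assms(1)] unfolding X_def Y_def C_def .
  show X: "X \<subseteq> {..<c}" unfolding X_def by blast
  have "\<Union>C \<subseteq> {..<N}"
    using perfect_matching_edge_subset[OF assms(1)] unfolding C_def edges_across_def by blast
  then show Y: "Y \<subseteq> {c..<N}" unfolding Y_def by auto
  have fin: "finite X" "finite Y" using X Y by (auto intro: finite_subset)
  have XY: "X \<inter> Y = {}" unfolding X_def Y_def by auto
  show "card C = card X" using card_cross_matching[OF cross XY] by simp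
  then show "card Y = card X" using card_cross_matching[OF cross_matching_sym[OF cross]] XY by auto
  show A: "\<Union>(edges_below c M) = {..<c} - X" "\<Union>(edges_above c M) = {c..<N} - Y"
    using Union_edges_below_above[OF assms(1,2)] unfolding X_def Y_def C_def by auto
  show M: "M = edges_below c M \<union> C \<union> edges_above c M"
    unfolding C_def edges_below_def edges_above_def edges_across_def by blast
  have fM: "finite M" using perfect_matching_card(1)[OF assms(1)] by simp
  have "e \<noteq> {}" if "e \<in> M" for e using perfect_matching_edge_nonempty[OF assms(1) that] .
  then have "(edges_below c M \<union> C) \<inter> edges_above c M = {}" "edges_below c M \<inter> C = {}"
    unfolding C_def edges_below_def edges_above_def edges_across_def by fastforce+
  moreover have "finite (edges_below c M)" "finite C" "finite (edges_above c M)"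
    using fM unfolding C_def edges_below_def edges_above_def edges_across_def by simp_all
  ultimately have "card M = card (edges_below c M) + card C + card (edges_above c M)"
    by (subst M) (simp add: card_Un_disjoint)
  then show "card M = card (edges_below c M) + card X + card (edges_above c M)"
    using \<open>card C = card X\<close> by simp
  have "perfect_matching (edges_below c M) (\<Union>(edges_below c M))"
    by (rule perfect_matching_subset[OF assms(1)]) (simp add: edges_below_def)
  then have "card ({..<c} - X) = 2 * card (edges_below c M)"
    using perfect_matching_card(2) A(1) by (metis finite_Diff finite_lessThan)
  moreover have "card X \<le> c" using card_mono[OF _ X] by simp
  ultimately show "2 * card (edges_below c M) + card X = c"
    using card_Diff_subset[OF fin(1) X] by simp
qed

section \<open>The decomposition bijection\<close>

definition juxt_avoiders_containing :: "nat set set \<Rightarrow> nat set set \<Rightarrow> nat \<Rightarrow> nat set set set" where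
  "juxt_avoiders_containing \<sigma> \<tau> n = {M \<in> avoiders n {juxt \<sigma> \<tau>}. contains M \<sigma>}"

definition cut_class :: "nat set set \<Rightarrow> nat set set \<Rightarrow> nat \<Rightarrow> nat \<Rightarrow> nat \<Rightarrow> nat set set set" where
  "cut_class \<sigma> \<tau> n l k = {M \<in> juxt_avoiders_containing \<sigma> \<tau> n.
     card (edges_below (cut_point \<sigma> M) M) = l \<and> cut_point \<sigma> M = 2 * l + k}"

text \<open>
  A datum \<open>(X, Y, C, L, V)\<close> consists of the left and right end points of the \<open>k\<close> edges
  crossing the cut \<open>2l + k\<close>, their pairing, and the standardized parts left and right of
  the cut. The vertex \<open>2l + k - 1\<close> is excluded from \<open>X\<close> because it belongs to the part
  containing \<open>\<sigma>\<close>; this is where the factor \<open>(2l + k - 1 choose k)\<close> comes from.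
\<close>

type_synonym cut_datum = "nat set \<times> nat set \<times> nat set set \<times> nat set set \<times> nat set set"

definition cut_data :: "nat set set \<Rightarrow> nat set set \<Rightarrow> nat \<Rightarrow> nat \<Rightarrow> nat \<Rightarrow> cut_datum set" where
  "cut_data \<sigma> \<tau> n l k =
     (SIGMA X:{X. X \<subseteq> {..<2 * l + k - 1} \<and> card X = k}. SIGMA Y:{Y. Y \<subseteq> {2 * l + k..<2 * n} \<and> card Y = k}.
        {C. cross_matching X Y C} \<times> mu l \<sigma> \<times> avoiders (n - l - k) {\<tau>})"

definition assemble :: "nat \<Rightarrow> nat \<Rightarrow> nat \<Rightarrow> cut_datum \<Rightarrow> nat set set" where
  "assemble n l k = (\<lambda>(X, Y, C, L, V). relabel (enumerate ({..<2 * l + k} - X)) L \<union> C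
     \<union> relabel (enumerate ({2 * l + k..<2 * n} - Y)) V)"

definition decompose :: "nat set set \<Rightarrow> nat set set \<Rightarrow> cut_datum" where
  "decompose \<sigma> M = (let c = cut_point \<sigma> M; C = edges_across c M in
     (\<Union>C \<inter> {..<c}, \<Union>C \<inter> {c..}, C, standardize (edges_below c M), standardize (edges_above c M)))"

lemma mem_cut_data:
  "(X, Y, C, L, V) \<in> cut_data \<sigma> \<tau> n l k \<longleftrightarrow>
     X \<subseteq> {..<2 * l + k - 1} \<and> card X = k \<and> Y \<subseteq> {2 * l + k..<2 * n} \<and> card Y = k
     \<and> cross_matching X Y C \<and> L \<in> mu l \<sigma> \<and> V \<in> avoiders (n - l - k) {\<tau>}"
  unfolding cut_data_def by auto

lemma assemble_edges:
  assumes lkn: "l + k \<le> n" and d: "(X, Y, C, L, V) \<in> cut_data \<sigma> \<tau> n l k"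
  defines "M \<equiv> assemble n l k (X, Y, C, L, V)"
  shows "is_matching M" "card M = n" "edges_across (2 * l + k) M = C"
    "standardize (edges_below (2 * l + k) M) = L" "standardize (edges_above (2 * l + k) M) = V"
    "card (edges_below (2 * l + k) M) = l" "\<Union>(edges_below (2 * l + k) M) = {..<2 * l + k} - X"
proof -
  let ?c = "2 * l + k"
  let ?A = "{..<?c} - X" and ?B = "{?c..<2 * n} - Y"
  have X: "X \<subseteq> {..<?c}" "card X = k" and Y: "Y \<subseteq> {?c..<2 * n}" "card Y = k"
    and C: "cross_matching X Y C" and L: "is_matching L" "card L = l"
    and V: "is_matching V" "card V = n - l - k"
    using d unfolding mem_cut_data mu_def avoiders_def by auto
  have fin: "finite ?A" "finite ?B" by auto
  have "card ?A = 2 * l" using X by (subst card_Diff_subset) (auto intro: finite_subset)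
  then have pmL: "perfect_matching L {..<card ?A}" using L is_matching_iff_perfect_matching by auto
  have "card ?B = 2 * (n - l - k)" using Y by (subst card_Diff_subset) (auto intro: finite_subset)
  then have pmV: "perfect_matching V {..<card ?B}" using V is_matching_iff_perfect_matching by auto
  have cN: "?c \<le> 2 * n" using lkn by simp
  have "M = relabel (enumerate ?A) L \<union> C \<union> relabel (enumerate ?B) V"
    unfolding M_def assemble_def by simp
  note parts = perfect_matching_assemble[OF cN X(1) Y(1) C pmL pmV, folded this]
  show "is_matching M" "card M = n" using is_matching_if_perfect_matching parts(1) by auto
  show "edges_across ?c M = C" by (fact parts(4))
  show "standardize (edges_below ?c M) = L" "standardize (edges_above ?c M) = V"
    using standardize_relabel_enumerate fin pmL pmV parts(2,3) by auto
  show "card (edges_below ?c M) = l"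
    using perfect_matching_relabel_enumerate(2)[OF fin(1) pmL] parts(2) L by simp
  show "\<Union>(edges_below ?c M) = ?A"
    using perfect_matching_relabel_enumerate(1)[OF fin(1) pmL] parts(2)
    unfolding perfect_matching_def by simp
qed

lemma assemble_in_cut_class:
  assumes \<sigma>: "is_matching \<sigma>" "\<sigma> \<noteq> {}" and \<tau>: "is_matching \<tau>" and lkn: "l + k \<le> n"
    and d: "(X, Y, C, L, V) \<in> cut_data \<sigma> \<tau> n l k"
  shows "assemble n l k (X, Y, C, L, V) \<in> cut_class \<sigma> \<tau> n l k"
    "decompose \<sigma> (assemble n l k (X, Y, C, L, V)) = (X, Y, C, L, V)"
proof -
  let ?c = "2 * l + k"
  define M where "M = assemble n l k (X, Y, C, L, V)"
  note M = assemble_edges[OF lkn d, folded M_def]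
  have X: "X \<subseteq> {..<?c - 1}" and Y: "Y \<subseteq> {?c..<2 * n}" and C: "cross_matching X Y C"
    and L: "minimally_contains L \<sigma>" "card L = l" and V: "\<not> contains V \<tau>"
    using d unfolding mem_cut_data mu_def avoiders_def by auto
  have \<sigma>0: "card \<sigma> \<noteq> 0" using \<sigma> unfolding is_matching_def by simp
  then have l: "0 < l" using card_le_if_contains L unfolding minimally_contains_def by fastforce
  then have "?c - 1 \<in> \<Union>(edges_below ?c M)" using M(7) X by auto
  then have "occurs_within \<sigma> M {..<?c}" "\<not> occurs_within \<sigma> M {..<?c - 1}"
    using minimally_contains_standardize_edges_below[OF \<sigma>(1) \<sigma>0 _ finite_lessThan]
      M(1,4) L(1) is_matching_iff_perfect_matching by blast+
  then have cut: "cut_point \<sigma> M = ?c" and "contains M \<sigma>"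
    using cut_point_eqI l lkn M(2) occurs_within_mono unfolding contains_iff_occurs_within by auto
  moreover have "\<not> contains M (juxt \<sigma> \<tau>)"
    using contains_juxt_iff_standardize_edges_above[OF \<sigma>(1) \<tau> M(1) \<open>contains M \<sigma>\<close>] M(5) cut V
    by simp
  ultimately show "assemble n l k (X, Y, C, L, V) \<in> cut_class \<sigma> \<tau> n l k"
    using M(1,2,6) unfolding M_def[symmetric] cut_class_def juxt_avoiders_containing_def avoiders_def
    by simp
  have "\<Union>C = X \<union> Y" using C unfolding cross_matching_def perfect_matching_def by simp
  then have "\<Union>C \<inter> {..<?c} = X" "\<Union>C \<inter> {?c..} = Y" using X Y by auto
  then show "decompose \<sigma> (assemble n l k (X, Y, C, L, V)) = (X, Y, C, L, V)"
    unfolding M_def[symmetric] decompose_def Let_def cut M(3-5) by simp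
qed

lemma standardize_edges_below_cut_point_in_mu:
  assumes "is_matching \<sigma>" "\<sigma> \<noteq> {}" "is_matching M" "contains M \<sigma>"
  shows "standardize (edges_below (cut_point \<sigma> M) M) \<in> mu (card (edges_below (cut_point \<sigma> M) M)) \<sigma>"
proof -
  let ?c = "cut_point \<sigma> M"
  let ?I = "edges_below ?c M"
  have \<sigma>0: "card \<sigma> \<noteq> 0" using assms(1,2) unfolding is_matching_def by simp
  have pm: "perfect_matching M {..<2 * card M}" using assms(3) is_matching_iff_perfect_matching by blast
  have pmI: "perfect_matching ?I (\<Union>?I)"
    by (rule perfect_matching_subset[OF pm]) (simp add: edges_below_def)
  have "\<Union>?I \<subseteq> {..<2 * card M}" using perfect_matching_edge_subset[OF pm] unfolding edges_below_def by auto
  then have "finite (\<Union>?I)" by (rule finite_subset) simp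
  then show ?thesis
    using is_matching_standardize[OF pmI]
      minimally_contains_standardize_edges_below[OF assms(1) \<sigma>0 pm finite_lessThan
        last_vertex_below_cut_point[OF assms(1) \<sigma>0 assms(4)]]
      occurs_within_cut_point(1)[OF assms(4)] not_occurs_within_below_cut_point[of "?c - 1" \<sigma> M]
      cut_point_pos[OF \<sigma>0 assms(4)]
    unfolding mu_def by simp
qed

lemma decompose_in_cut_data:
  assumes \<sigma>: "is_matching \<sigma>" "\<sigma> \<noteq> {}" and \<tau>: "is_matching \<tau>" and M: "M \<in> cut_class \<sigma> \<tau> n l k"
  shows "decompose \<sigma> M \<in> cut_data \<sigma> \<tau> n l k" "assemble n l k (decompose \<sigma> M) = M" "l + k \<le> n"
proof -
  let ?c = "cut_point \<sigma> M"
  let ?I = "edges_below ?c M" and ?O = "edges_above ?c M" and ?C = "edges_across ?c M"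
  let ?X = "\<Union>?C \<inter> {..<?c}" and ?Y = "\<Union>?C \<inter> {?c..}"
  have mM: "is_matching M" "card M = n" "contains M \<sigma>" "\<not> contains M (juxt \<sigma> \<tau>)"
    and l: "card ?I = l" and c: "?c = 2 * l + k"
    using M unfolding cut_class_def juxt_avoiders_containing_def avoiders_def by auto
  have pm: "perfect_matching M {..<2 * n}" using mM(1,2) is_matching_iff_perfect_matching by blast
  have cN: "?c \<le> 2 * n" using occurs_within_cut_point(2)[OF mM(3)] mM(2) by simp
  note split = edges_split_at[OF pm cN]
  have k: "card ?X = k" using split(10) l c by simp
  show lkn: "l + k \<le> n" using split(9) l k mM(2) by simp
  have "?c - 1 \<notin> ?X"
    using last_vertex_below_cut_point[OF \<sigma>(1) _ mM(3)] \<sigma> split(6) unfolding is_matching_def by auto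
  have X: "?X \<subseteq> {..<2 * l + k - 1}"
  proof
    fix x assume "x \<in> ?X"
    then have "x < ?c" "x \<noteq> ?c - 1" using \<open>?c - 1 \<notin> ?X\<close> by auto
    then show "x \<in> {..<2 * l + k - 1}" using c by simp
  qed
  have fin: "finite (\<Union>?I)" "finite (\<Union>?O)" using split(6,7) by auto
  have pmO: "perfect_matching ?O (\<Union>?O)"
    by (rule perfect_matching_subset[OF pm]) (simp add: edges_above_def)
  have "standardize ?O \<in> avoiders (n - l - k) {\<tau>}"
    using is_matching_standardize[OF pmO fin(2)] split(9) l k mM(2)
      contains_juxt_iff_standardize_edges_above[OF \<sigma>(1) \<tau> mM(1,3)] mM(4)
    unfolding avoiders_def by simp
  moreover have D: "decompose \<sigma> M = (?X, ?Y, ?C, standardize ?I, standardize ?O)"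
    unfolding decompose_def Let_def ..
  ultimately show "decompose \<sigma> M \<in> cut_data \<sigma> \<tau> n l k"
    using X k split(1,3,4) c standardize_edges_below_cut_point_in_mu[OF \<sigma> mM(1,3)] l
    unfolding D mem_cut_data by simp
  show "assemble n l k (decompose \<sigma> M) = M"
    using split(6-8) relabel_enumerate_standardize[OF fin(1)] relabel_enumerate_standardize[OF fin(2)] c
    unfolding D assemble_def by simp
qed

lemma bij_betw_assemble:
  assumes "is_matching \<sigma>" "\<sigma> \<noteq> {}" "is_matching \<tau>" "l + k \<le> n"
  shows "bij_betw (assemble n l k) (cut_data \<sigma> \<tau> n l k) (cut_class \<sigma> \<tau> n l k)"
  by (rule bij_betw_byWitness[where f' = "decompose \<sigma>"])
    (use assemble_in_cut_class[OF assms] decompose_in_cut_data[OF assms(1-3)] in auto)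

section \<open>Counting\<close>

lemma card_Sigma_constant:
  assumes "finite A" "\<And>a. a \<in> A \<Longrightarrow> finite (B a)" "\<And>a. a \<in> A \<Longrightarrow> card (B a) = m"
  shows "card (Sigma A B) = card A * m" "finite (Sigma A B)"
  using assms by (simp_all add: finite_SigmaI)

lemma card_cut_data:
  "card (cut_data \<sigma> \<tau> n l k) = ((2 * l + k - 1) choose k) * ((2 * n - 2 * l - k) choose k) * fact k
     * card (mu l \<sigma>) * card (avoiders (n - l - k) {\<tau>})"
proof -
  let ?XS = "{X. X \<subseteq> {..<2 * l + k - 1} \<and> card X = k}"
  let ?YS = "{Y. Y \<subseteq> {2 * l + k..<2 * n} \<and> card Y = k}"
  let ?P = "mu l \<sigma> \<times> avoiders (n - l - k) {\<tau>}"
  have "finite (mu l \<sigma>)" "finite (avoiders (n - l - k) {\<tau>})"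
    by (rule finite_subset[OF _ finite_matchings[of l]], auto simp: mu_def)
      (rule finite_subset[OF _ finite_matchings[of "n - l - k"]], auto simp: avoiders_def)
  then have fP: "finite ?P" by simp
  have fXS: "finite ?XS" "finite ?YS" by (auto intro: finite_subset[of _ "Pow _"])
  have inner: "card ({C. cross_matching X Y C} \<times> ?P) = fact k * card ?P"
    "finite ({C. cross_matching X Y C} \<times> ?P)" if "X \<in> ?XS" "Y \<in> ?YS" for X Y
  proof -
    have fin: "finite X" "finite Y" using that by (auto intro: finite_subset)
    moreover have "X \<inter> Y = {}" using that by fastforce
    ultimately have "card {C. cross_matching X Y C} = fact k"
      using card_cross_matchings that by blast
    moreover have "finite {C. cross_matching X Y C}" using finite_cross_matchings[OF fin] .
    ultimately show "card ({C. cross_matching X Y C} \<times> ?P) = fact k * card ?P"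
      "finite ({C. cross_matching X Y C} \<times> ?P)"
      using fP by (simp_all add: card_cartesian_product)
  qed
  have middle: "card (SIGMA Y:?YS. {C. cross_matching X Y C} \<times> ?P) = card ?YS * (fact k * card ?P)"
    "finite (SIGMA Y:?YS. {C. cross_matching X Y C} \<times> ?P)" if "X \<in> ?XS" for X
    using card_Sigma_constant[OF fXS(2), of "\<lambda>Y. {C. cross_matching X Y C} \<times> ?P"] inner[OF that]
    by auto
  have "card (cut_data \<sigma> \<tau> n l k) = card ?XS * (card ?YS * (fact k * card ?P))"
    unfolding cut_data_def using card_Sigma_constant(1)[OF fXS(1)] middle by auto
  also have "card ?XS = (2 * l + k - 1) choose k" using n_subsets[of "{..<2 * l + k - 1}" k] by simp
  also have "card ?YS = (2 * n - 2 * l - k) choose k" using n_subsets[of "{2 * l + k..<2 * n}" k] by simp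
  finally show ?thesis by (simp add: card_cartesian_product)
qed

lemma contains_if_contains_juxt:
  assumes "is_matching \<sigma>" "is_matching \<tau>" "is_matching M" "contains M (juxt \<sigma> \<tau>)"
  shows "contains M \<sigma>"
  using assms contains_juxt_iff[OF assms(1-3)] occurs_within_mono[of \<sigma> M]
  unfolding contains_iff_occurs_within by (meson lessThan_subset_iff)

lemma card_avoiders_juxt:
  assumes "is_matching \<sigma>" "is_matching \<tau>"
  shows "card (avoiders n {juxt \<sigma> \<tau>}) = card (avoiders n {\<sigma>}) + card (juxt_avoiders_containing \<sigma> \<tau> n)"
proof -
  have "avoiders n {juxt \<sigma> \<tau>} = avoiders n {\<sigma>} \<union> juxt_avoiders_containing \<sigma> \<tau> n"
    using contains_if_contains_juxt[OF assms]
    unfolding juxt_avoiders_containing_def avoiders_def by auto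
  moreover have "finite (avoiders n {juxt \<sigma> \<tau>})"
    by (rule finite_subset[OF _ finite_matchings[of n]]) (auto simp: avoiders_def)
  moreover have "avoiders n {\<sigma>} \<inter> juxt_avoiders_containing \<sigma> \<tau> n = {}"
    unfolding juxt_avoiders_containing_def avoiders_def by auto
  ultimately show ?thesis by (simp add: card_Un_disjoint)
qed

lemma juxt_avoiders_containing_eq_UN_cut_class:
  assumes "is_matching \<sigma>" "\<sigma> \<noteq> {}" "is_matching \<tau>"
  shows "juxt_avoiders_containing \<sigma> \<tau> n = (\<Union>l\<in>{0..n}. \<Union>k\<in>{0..n - l}. cut_class \<sigma> \<tau> n l k)"
proof
  show "(\<Union>l\<in>{0..n}. \<Union>k\<in>{0..n - l}. cut_class \<sigma> \<tau> n l k) \<subseteq> juxt_avoiders_containing \<sigma> \<tau> n"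
    unfolding cut_class_def by auto
  show "juxt_avoiders_containing \<sigma> \<tau> n \<subseteq> (\<Union>l\<in>{0..n}. \<Union>k\<in>{0..n - l}. cut_class \<sigma> \<tau> n l k)"
  proof
    fix M assume M: "M \<in> juxt_avoiders_containing \<sigma> \<tau> n"
    let ?c = "cut_point \<sigma> M"
    let ?l = "card (edges_below ?c M)"
    have mM: "perfect_matching M {..<2 * n}" "contains M \<sigma>" "card M = n"
      using M is_matching_iff_perfect_matching
      unfolding juxt_avoiders_containing_def avoiders_def by auto
    then have "?c \<le> 2 * n" using occurs_within_cut_point(2)[OF mM(2)] by simp
    then have "2 * ?l \<le> ?c" using edges_split_at(10)[OF mM(1)] by (metis le_add1)
    then have "M \<in> cut_class \<sigma> \<tau> n ?l (?c - 2 * ?l)" using M unfolding cut_class_def by simp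
    moreover from this have "?l + (?c - 2 * ?l) \<le> n" by (rule decompose_in_cut_data(3)[OF assms])
    ultimately show "M \<in> (\<Union>l\<in>{0..n}. \<Union>k\<in>{0..n - l}. cut_class \<sigma> \<tau> n l k)" by force
  qed
qed

lemma card_juxt_avoiders_containing:
  assumes "is_matching \<sigma>" "\<sigma> \<noteq> {}" "is_matching \<tau>"
  shows "card (juxt_avoiders_containing \<sigma> \<tau> n) = (\<Sum>l = 0..n. \<Sum>k = 0..n - l. card (cut_class \<sigma> \<tau> n l k))"
proof -
  have fin: "finite (cut_class \<sigma> \<tau> n l k)" for l k
    by (rule finite_subset[OF _ finite_matchings[of n]])
      (auto simp: cut_class_def juxt_avoiders_containing_def avoiders_def)
  have "card (\<Union>k\<in>{0..n - l}. cut_class \<sigma> \<tau> n l k) = (\<Sum>k = 0..n - l. card (cut_class \<sigma> \<tau> n l k))" for l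
    using fin by (intro card_UN_disjoint) (auto simp: cut_class_def)
  moreover have "card (\<Union>l\<in>{0..n}. \<Union>k\<in>{0..n - l}. cut_class \<sigma> \<tau> n l k)
      = (\<Sum>l = 0..n. card (\<Union>k\<in>{0..n - l}. cut_class \<sigma> \<tau> n l k))"
    using fin by (intro card_UN_disjoint) (auto simp: cut_class_def)
  ultimately show ?thesis unfolding juxt_avoiders_containing_eq_UN_cut_class[OF assms] by simp
qed

lemma mu_eq_empty_if_less: "l < card \<sigma> \<Longrightarrow> mu l \<sigma> = {}"
  using card_le_if_contains unfolding mu_def minimally_contains_def by fastforce

text \<open>Only the term \<open>l = k = 0\<close> survives, with \<open>(0 - 1) choose 0 = 1\<close> in truncated subtraction.\<close>

lemma sum_for_empty_pattern:
  "(\<Sum>l = 0..n. \<Sum>k = 0..n - l. ((2 * l + k - 1) choose k) * ((2 * n - 2 * l - k) choose k) * fact k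
     * card (mu l {}) * card (avoiders (n - l - k) {\<tau>})) = card (avoiders n {\<tau>})"
proof -
  have "mu l {} = (if l = 0 then {{}} else {})" for l
    unfolding mu_def minimally_contains_def contains_def is_matching_def by auto
  moreover have "((k - 1) choose k) = (if k = 0 then 1 else 0)" for k by simp
  ultimately show ?thesis by (simp add: sum.atLeast_Suc_atMost sum.neutral)
qed

theorem proposition2:
  fixes \<sigma> \<tau> :: "nat set set" and n :: nat
  assumes "is_matching \<sigma>" and "is_matching \<tau>" and "n \<ge> card \<sigma>"
  shows "card (avoiders n {juxt \<sigma> \<tau>}) =
    card (avoiders n {\<sigma>}) +
    (\<Sum>l = card \<sigma>..n. \<Sum>k = 0..n - l.
       ((2 * l + k - 1) choose k) * ((2 * n - 2 * l - k) choose k) * fact k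
       * card (mu l \<sigma>) * card (avoiders (n - l - k) {\<tau>}))"
proof (cases "\<sigma> = {}")
  case True
  have "avoiders n {{}} = {}" unfolding avoiders_def contains_def by simp
  then show ?thesis using True sum_for_empty_pattern[of n \<tau>] by (simp add: juxt_def)
next
  case False
  define F where "F l k = ((2 * l + k - 1) choose k) * ((2 * n - 2 * l - k) choose k) * fact k
    * card (mu l \<sigma>) * card (avoiders (n - l - k) {\<tau>})" for l k
  have "card (cut_class \<sigma> \<tau> n l k) = F l k" if "l \<in> {0..n}" "k \<in> {0..n - l}" for l k
    using bij_betw_same_card[OF bij_betw_assemble[OF assms(1) False assms(2)]] that card_cut_data
    unfolding F_def by auto
  then have "card (juxt_avoiders_containing \<sigma> \<tau> n) = (\<Sum>l = 0..n. \<Sum>k = 0..n - l. F l k)"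
    using card_juxt_avoiders_containing[OF assms(1) False assms(2)] by simp
  also have "\<dots> = (\<Sum>l = card \<sigma>..n. \<Sum>k = 0..n - l. F l k)"
    by (rule sum.mono_neutral_right) (auto simp: F_def mu_eq_empty_if_less)
  finally show ?thesis using card_avoiders_juxt[OF assms(1,2)] unfolding F_def by simp
qed

end
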